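(* Let $I=(i_1\le\cdots\le i_k)$ be a non-decreasing multiset of $[m+n]$ and $\lambda=(\lambda_1,\ldots,\lambda_l)$ a partition of $k$. Then $$\mathrm{Imm}_{\psi^{\lambda}}(X_I)=\sum_{(I_1,\ldots,I_l)}\frac{\alpha(I)}{\alpha(I_1)\cdots\alpha(I_l)}\mathrm{Imm}_{\chi^{(1^{\lambda_1})}}(X_{I_1})\cdots\mathrm{Imm}_{\chi^{(1^{\lambda_l})}}(X_{I_l}),$$ $$\mathrm{Imm}_{\phi^{\lambda}}(X_I)=\sum_{(I_1,\ldots,I_l)}\frac{\alpha(I)}{\alpha(I_1)\cdots\alpha(I_l)}\mathrm{Imm}_{\chi^{(\lambda_1)}}(X_{I_1})\cdots\mathrm{Imm}_{\chi^{(\lambda_l)}}(X_{I_l}),$$ where the sums run over all sequences $(I_1,\ldots,I_l)$ of non-decreasing multisets of $[m+n]$ with $|I_j|=\lambda_j$ whose multiset union is $I$.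
   Context: $\mathbb{C}^{m|n}$ has homogeneous basis $e_1,\ldots,e_{m+n}$, parity $\bar i=0$ for $i\le m$, $\bar i=1$ for $i>m$; $e_{ij}$ are matrix units of parity $\bar i+\bar j$. $\mathcal{A}=A(\mathrm{Mat}_{m|n})$ is the free supercommutative $\mathbb{C}$-algebra on generators $x_{ij}$ of parity $\bar i+\bar j$. For $k\ge1$, $X_a=\sum_{i,j}x_{ij}\otimes1^{\otimes(a-1)}\otimes e_{ij}\otimes1^{\otimes(k-a)}\in\mathcal{A}\otimes\mathrm{End}(\mathbb{C}^{m|n})^{\otimes k}$ (graded tensor products, sign rule $(a\otimes b)(c\otimes d)=(-1)^{|b||c|}ac\otimes bd$). $\mathfrak{S}_k$ acts on $(\mathbb{C}^{m|n})^{\otimes k}$ by $\sigma\cdot(e_{i_1}\otimes\cdots\otimes e_{i_k})=(-1)^{\bar I_\sigma}e_{i_{\sigma^{-1}(1)}}\otimes\cdots\otimes e_{i_{\sigma^{-1}(k)}}$, $\bar I_\sigma=\sum_{p<q,\sigma(p)>\sigma(q)}\bar i_p\bar i_q$, extended to $\mathbb{C}[\mathfrak{S}_k]$ (even elements $1\otimes(\cdot)$). For even $T=\sum_{I,J}T^I_J\otimes e_{i_1j_1}\otimes\cdots\otimes e_{i_kj_k}$, $\langle I\mid T\mid J\rangle=(-1)^{\gamma(I,J)}T^I_J$, $\gamma(I,J)=\sum_a\bar i_a(\bar j_a+1)+\sum_{a<b}\bar j_b(\bar i_a+\bar j_a)$. For a character $\chi$ of $\mathfrak{S}_k$ (identified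 with $\sum_\sigma\chi(\sigma)\sigma$) and a $k$-tuple $I$, $\mathrm{Imm}_{\chi}(X_I)=(-1)^{\sum_p\bar i_p}\langle I\mid\chi X_1\cdots X_k\mid I\rangle$. $\chi^{\mu}$ denotes the irreducible character indexed by $\mu$; $(1^j)$ and $(j)$ are the one-column and one-row partitions. $\psi^{\lambda}$ (resp. $\phi^{\lambda}$) is the character of $\mathfrak{S}_k$ induced from the sign character (resp. trivial character) of the Young subgroup $\mathfrak{S}_{\lambda_1}\times\cdots\times\mathfrak{S}_{\lambda_l}$. For a non-decreasing multiset $I$, $\alpha(I)=\prod_i\alpha_i!$ with $\alpha_i$ the multiplicity of $i$ in $I$. *)

theory Defs
  imports Complex_Main "HOL-Library.Poly_Mapping" "HOL-Library.Product_Lexorder"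
    "HOL-Combinatorics.Permutations"
begin

text \<open>Indices of the basis of C^(m|n) are 1..m+n; parity 0 for i \<le> m, 1 otherwise.\<close>
definition par :: "nat \<Rightarrow> nat \<Rightarrow> nat" where
  "par m i = (if i \<le> m then 0 else 1)"

text \<open>parity (mod 2) of the matrix unit e_ij, also of the generator x_ij\<close>
definition eP :: "nat \<Rightarrow> nat \<Rightarrow> nat \<Rightarrow> nat" where
  "eP m i j = (par m i + par m j) mod 2"

text \<open>Monomials: exponent functions on generators (i,j); elements: finitely supported
  complex linear combinations of monomials. Basis monomials have exponent \<le> 1 on odd
  generators; odd generators are ordered by the lexicographic order on pairs.\<close>
type_synonym smon = "(nat \<times> nat) \<Rightarrow>\<^sub>0 nat"
type_synonym salg = "smon \<Rightarrow>\<^sub>0 complex"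

definition oddgen :: "nat \<Rightarrow> nat \<times> nat \<Rightarrow> bool" where
  "oddgen m g = (eP m (fst g) (snd g) = 1)"

text \<open>sign (or 0) arising when multiplying the monomial a by the monomial b\<close>
definition msign :: "nat \<Rightarrow> smon \<Rightarrow> smon \<Rightarrow> complex" where
  "msign m a b = (if (\<exists>g \<in> Poly_Mapping.keys a \<inter> Poly_Mapping.keys b. oddgen m g) then 0
     else (-1) ^ card {(g, h). g \<in> Poly_Mapping.keys a \<and> h \<in> Poly_Mapping.keys b \<and> oddgen m g \<and> oddgen m h \<and> h < g})"

definition sprod :: "nat \<Rightarrow> salg \<Rightarrow> salg \<Rightarrow> salg" where
  "sprod m p q = (\<Sum>a\<in>Poly_Mapping.keys p. \<Sum>b\<in>Poly_Mapping.keys q.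
      Poly_Mapping.single (a + b) (Poly_Mapping.lookup p a * Poly_Mapping.lookup q b * msign m a b))"

definition sone :: salg where
  "sone = Poly_Mapping.single 0 1"

definition sscale :: "complex \<Rightarrow> salg \<Rightarrow> salg" where
  "sscale c p = (\<Sum>a\<in>Poly_Mapping.keys p. Poly_Mapping.single a (c * Poly_Mapping.lookup p a))"

definition gen :: "nat \<Rightarrow> nat \<Rightarrow> salg" where
  "gen i j = Poly_Mapping.single (Poly_Mapping.single (i, j) 1) 1"

definition sprod_list :: "nat \<Rightarrow> salg list \<Rightarrow> salg" where
  "sprod_list m xs = foldr (sprod m) xs sone"

text \<open>An element T = sum T^I_J \<otimes> e_(i1 j1) \<otimes> ... \<otimes> e_(ik jk) is represented by its
  coefficient function (I,J) \<mapsto> T^I_J, for I, J in idx m n k.\<close>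
type_synonym tens = "nat list \<Rightarrow> nat list \<Rightarrow> salg"

definition idx :: "nat \<Rightarrow> nat \<Rightarrow> nat \<Rightarrow> nat list set" where
  "idx m n k = {L. length L = k \<and> set L \<subseteq> {1..m+n}}"

text \<open>total parity of e_(i1 k1) \<otimes> ... \<otimes> e_(ik kk)\<close>
definition tpar :: "nat \<Rightarrow> nat list \<Rightarrow> nat list \<Rightarrow> nat" where
  "tpar m I K = (\<Sum>p<length I. eP m (I ! p) (K ! p))"

text \<open>sign exponent of (e_IK)(e_KJ) = (-1)^(...) e_IJ in the graded tensor product
  (a_1 \<otimes> ... \<otimes> a_k)(b_1 \<otimes> ... \<otimes> b_k) = (-1)^(sum_(p>q) |a_p||b_q|) a_1 b_1 \<otimes> ... \<otimes> a_k b_k\<close>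
definition cross :: "nat \<Rightarrow> nat list \<Rightarrow> nat list \<Rightarrow> nat list \<Rightarrow> nat" where
  "cross m I K J = (\<Sum>p<length I. \<Sum>q<p. eP m (I ! p) (K ! p) * eP m (K ! q) (J ! q))"

text \<open>Product S T in A \<otimes> End^{\<otimes>k} for even S, T (so the coefficient T^K_J has
  parity equal to that of e_KJ); sign rule (a \<otimes> b)(c \<otimes> d) = (-1)^(|b||c|) ac \<otimes> bd.\<close>
definition tmul :: "nat \<Rightarrow> nat \<Rightarrow> nat \<Rightarrow> tens \<Rightarrow> tens \<Rightarrow> tens" where
  "tmul m n k S T = (\<lambda>I J. \<Sum>K\<in>idx m n k.
      sscale ((-1) ^ (tpar m I K * tpar m K J + cross m I K J)) (sprod m (S I K) (T K J)))"

definition tone :: tens where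
  "tone = (\<lambda>I J. if I = J then sone else 0)"

text \<open>X_a (positions 0-based: a < k)\<close>
definition Xop :: "nat \<Rightarrow> nat \<Rightarrow> tens" where
  "Xop k a = (\<lambda>I J. if (\<forall>b<k. b \<noteq> a \<longrightarrow> I ! b = J ! b) then gen (I ! a) (J ! a) else 0)"

definition Xprod :: "nat \<Rightarrow> nat \<Rightarrow> nat \<Rightarrow> tens" where
  "Xprod m n k = foldl (tmul m n k) tone (map (Xop k) [0..<k])"

text \<open>Permutations of positions {0..<k}. Sign exponent I_sigma of the action
  sigma (e_j1 \<otimes> ... \<otimes> e_jk) = (-1)^(I_sigma) e_(j_sigma^-1(1)) \<otimes> ...\<close>
definition Ibar :: "nat \<Rightarrow> (nat \<Rightarrow> nat) \<Rightarrow> nat list \<Rightarrow> nat" where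
  "Ibar m \<sigma> J = (\<Sum>p<length J. \<Sum>q<length J.
      if p < q \<and> \<sigma> p > \<sigma> q then par m (J ! p) * par m (J ! q) else 0)"

text \<open>matrix entry: coefficient of e_I in sigma(e_J)\<close>
definition perm_mat :: "nat \<Rightarrow> (nat \<Rightarrow> nat) \<Rightarrow> nat list \<Rightarrow> nat list \<Rightarrow> complex" where
  "perm_mat m \<sigma> I J =
     (if I = map (\<lambda>p. J ! inv \<sigma> p) [0..<length J] then (-1) ^ Ibar m \<sigma> J else 0)"

text \<open>Identification End(V)^{\<otimes>k} = End(V^{\<otimes>k}) via the Koszul rule
  (f_1 \<otimes> ... \<otimes> f_k)(v_1 \<otimes> ... \<otimes> v_k) = (-1)^(sum_(p<q) |f_q||v_p|) f_1 v_1 \<otimes> ... \<otimes> f_k v_k,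
  so e_IJ (e_J) = (-1)^(sE I J) e_I.\<close>
definition sE :: "nat \<Rightarrow> nat list \<Rightarrow> nat list \<Rightarrow> nat" where
  "sE m I J = (\<Sum>q<length I. \<Sum>p<q. eP m (I ! q) (J ! q) * par m (J ! p))"

text \<open>an element sum_sigma chi(sigma) sigma of C[S_k], as the even element 1 \<otimes> (.)\<close>
definition chi_tens :: "nat \<Rightarrow> nat \<Rightarrow> nat \<Rightarrow> ((nat \<Rightarrow> nat) \<Rightarrow> complex) \<Rightarrow> tens" where
  "chi_tens m n k \<chi> = (\<lambda>I J. \<Sum>\<sigma>\<in>{\<sigma>. \<sigma> permutes {..<k}}.
      sscale (\<chi> \<sigma> * (-1) ^ sE m I J * perm_mat m \<sigma> I J) sone)"

definition gam :: "nat \<Rightarrow> nat list \<Rightarrow> nat list \<Rightarrow> nat" where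
  "gam m I J = (\<Sum>a<length I. par m (I ! a) * (par m (J ! a) + 1))
             + (\<Sum>b<length I. \<Sum>a<b. par m (J ! b) * (par m (I ! a) + par m (J ! a)))"

definition matel :: "nat \<Rightarrow> nat list \<Rightarrow> tens \<Rightarrow> nat list \<Rightarrow> salg" where
  "matel m I T J = sscale ((-1) ^ gam m I J) (T I J)"

definition Imm :: "nat \<Rightarrow> nat \<Rightarrow> ((nat \<Rightarrow> nat) \<Rightarrow> complex) \<Rightarrow> nat list \<Rightarrow> salg" where
  "Imm m n \<chi> I = (let k = length I in
     sscale ((-1) ^ (\<Sum>p<k. par m (I ! p)))
       (matel m I (tmul m n k (chi_tens m n k \<chi>) (Xprod m n k)) I))"

text \<open>chi^(1^j): the sign character; chi^(j): the trivial character\<close>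
definition chi_col :: "(nat \<Rightarrow> nat) \<Rightarrow> complex" where
  "chi_col \<sigma> = of_int (sign \<sigma>)"

definition chi_row :: "(nat \<Rightarrow> nat) \<Rightarrow> complex" where
  "chi_row \<sigma> = 1"

definition is_partition :: "nat list \<Rightarrow> nat \<Rightarrow> bool" where
  "is_partition lam k = (sorted (rev lam) \<and> (\<forall>x\<in>set lam. 0 < x) \<and> sum_list lam = k)"

text \<open>index (0-based) of the block of position p for the composition lam\<close>
definition blk :: "nat list \<Rightarrow> nat \<Rightarrow> nat" where
  "blk lam p = card {j. j < length lam \<and> sum_list (take (Suc j) lam) \<le> p}"

definition young :: "nat list \<Rightarrow> (nat \<Rightarrow> nat) set" where
  "young lam = {\<sigma>. \<sigma> permutes {..<sum_list lam} \<and> (\<forall>p<sum_list lam. blk lam (\<sigma> p) = blk lam p)}"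

definition ind_char :: "nat \<Rightarrow> (nat \<Rightarrow> nat) set \<Rightarrow> ((nat \<Rightarrow> nat) \<Rightarrow> complex)
    \<Rightarrow> (nat \<Rightarrow> nat) \<Rightarrow> complex" where
  "ind_char k H \<theta> g = (1 / of_nat (card H)) *
     (\<Sum>x\<in>{x. x permutes {..<k} \<and> inv x \<circ> g \<circ> x \<in> H}. \<theta> (inv x \<circ> g \<circ> x))"

definition psi :: "nat list \<Rightarrow> (nat \<Rightarrow> nat) \<Rightarrow> complex" where
  "psi lam = ind_char (sum_list lam) (young lam) (\<lambda>\<tau>. of_int (sign \<tau>))"

definition phi :: "nat list \<Rightarrow> (nat \<Rightarrow> nat) \<Rightarrow> complex" where
  "phi lam = ind_char (sum_list lam) (young lam) (\<lambda>\<tau>. 1)"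

definition alpha :: "nat list \<Rightarrow> nat" where
  "alpha I = (\<Prod>i\<in>set I. fact (count_list I i))"

definition decomps :: "nat \<Rightarrow> nat \<Rightarrow> nat list \<Rightarrow> nat list \<Rightarrow> nat list list set" where
  "decomps m n lam I = {Is. length Is = length lam \<and>
     (\<forall>j<length lam. sorted (Is ! j) \<and> length (Is ! j) = lam ! j \<and> set (Is ! j) \<subseteq> {1..m+n})
     \<and> mset (concat Is) = mset I}"

end

(*
  Expanding the matrix element gives Imm_chi(X_I) = sum_sigma chi(sigma) t_I(sigma), where
  t_I(sigma) is, up to a sign, the monomial x_(i_sigma(1) i_1) ... x_(i_sigma(k) i_k).  These
  terms are equivariant, t_(xI)(x^-1 sigma x) = t_I(sigma), and they factorise along block
  permutations, t_(J1 J2)(h1 + h2) = t_J1(h1) t_J2(h2).  Inserting the definition of the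
  induced character and conjugating, Imm_(Ind theta)(X_I) becomes |H|^-1 sum_x of
  sum_(h in H) theta(h) t_(xI)(h); for the Young subgroup H this inner sum is the product of
  the immanants Imm_theta of the consecutive blocks of xI, which for a class function theta
  depend only on the sorted blocks.  Finally every rearrangement of I comes from alpha(I)
  permutations x, and every sequence of sorted blocks (I_1, ..., I_l) from
  prod_j lambda_j! / alpha(I_j) rearrangements, which produces the coefficient
  alpha(I) / prod_j alpha(I_j).
*)
theory Submission
  imports Defs "HOL-Combinatorics.Multiset_Permutations"
begin

lemma lookup_sscale [simp]: "Poly_Mapping.lookup (sscale c p) k = c * Poly_Mapping.lookup p k"
proof -
  have "Poly_Mapping.lookup (sscale c p) k =
      (\<Sum>a\<in>Poly_Mapping.keys p. c * Poly_Mapping.lookup p a when a = k)"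
    by (simp add: sscale_def lookup_sum lookup_single)
  also have "\<dots> = c * Poly_Mapping.lookup p k"
    by (cases "k \<in> Poly_Mapping.keys p") (auto simp: when_def in_keys_iff)
  finally show ?thesis .
qed

lemma sscale_zero [simp]: "sscale c 0 = 0"
  by (rule poly_mapping_eqI) simp

lemma sscale_zero_left [simp]: "sscale 0 p = 0"
  by (rule poly_mapping_eqI) simp

lemma sscale_one [simp]: "sscale 1 p = p"
  by (rule poly_mapping_eqI) simp

lemma sscale_sscale [simp]: "sscale c (sscale d p) = sscale (c * d) p"
  by (rule poly_mapping_eqI) (simp add: algebra_simps)

lemma sscale_single [simp]: "sscale c (Poly_Mapping.single a d) = Poly_Mapping.single a (c * d)"
  by (rule poly_mapping_eqI) (simp add: lookup_single when_def)

lemma sscale_sum: "sscale c (sum f A) = (\<Sum>x\<in>A. sscale c (f x))"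
  by (rule poly_mapping_eqI) (simp add: lookup_sum sum_distrib_left)

lemma sscale_sum_left: "sscale (sum f A) p = (\<Sum>x\<in>A. sscale (f x) p)"
  by (rule poly_mapping_eqI) (simp add: lookup_sum sum_distrib_right)

lemma sum_const_sscale: "(\<Sum>x\<in>A. p) = sscale (of_nat (card A)) p"
proof (rule poly_mapping_eqI)
  show "Poly_Mapping.lookup (\<Sum>x\<in>A. p) k = Poly_Mapping.lookup (sscale (of_nat (card A)) p) k" for k
    unfolding lookup_sum lookup_sscale by simp
qed

lemma sprod_eq_sum_superset:
  assumes "finite A" "finite B" "Poly_Mapping.keys p \<subseteq> A" "Poly_Mapping.keys q \<subseteq> B"
  shows "sprod m p q = (\<Sum>a\<in>A. \<Sum>b\<in>B.
      Poly_Mapping.single (a + b) (Poly_Mapping.lookup p a * Poly_Mapping.lookup q b * msign m a b))"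
  unfolding sprod_def
  by (intro sum.mono_neutral_cong_left) (use assms in \<open>auto simp: in_keys_iff\<close>)

lemma sprod_add_left: "sprod m (p + q) r = sprod m p r + sprod m q r"
proof -
  have "Poly_Mapping.keys (p + q) \<subseteq> Poly_Mapping.keys p \<union> Poly_Mapping.keys q"
    by (rule keys_add)
  then show ?thesis
    by (simp add: sprod_eq_sum_superset[of "Poly_Mapping.keys p \<union> Poly_Mapping.keys q" "Poly_Mapping.keys r"]
        lookup_add distrib_right single_add sum.distrib)
qed

lemma sprod_add_right: "sprod m r (p + q) = sprod m r p + sprod m r q"
proof -
  have "Poly_Mapping.keys (p + q) \<subseteq> Poly_Mapping.keys p \<union> Poly_Mapping.keys q"
    by (rule keys_add)
  then show ?thesis
    by (simp add: sprod_eq_sum_superset[of "Poly_Mapping.keys r" "Poly_Mapping.keys p \<union> Poly_Mapping.keys q"]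
        lookup_add distrib_right distrib_left single_add sum.distrib)
qed

lemma sprod_zero_left [simp]: "sprod m 0 q = 0"
  by (simp add: sprod_def)

lemma sprod_zero_right [simp]: "sprod m p 0 = 0"
  by (simp add: sprod_def)

lemma sprod_sum_left: "sprod m (sum f A) q = (\<Sum>x\<in>A. sprod m (f x) q)"
  by (induction A rule: infinite_finite_induct) (auto simp: sprod_add_left)

lemma sprod_sum_right: "sprod m q (sum f A) = (\<Sum>x\<in>A. sprod m q (f x))"
  by (induction A rule: infinite_finite_induct) (auto simp: sprod_add_right)

lemma sprod_sscale_left: "sprod m (sscale c p) q = sscale c (sprod m p q)"
proof -
  have "Poly_Mapping.keys (sscale c p) \<subseteq> Poly_Mapping.keys p"
    by (auto simp: in_keys_iff)
  then show ?thesis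
    by (simp add: sprod_eq_sum_superset[of "Poly_Mapping.keys p" "Poly_Mapping.keys q"]
        sscale_sum mult.assoc)
qed

lemma sprod_sscale_right: "sprod m p (sscale c q) = sscale c (sprod m p q)"
proof -
  have "Poly_Mapping.keys (sscale c q) \<subseteq> Poly_Mapping.keys q"
    by (auto simp: in_keys_iff)
  then show ?thesis
    by (simp add: sprod_eq_sum_superset[of "Poly_Mapping.keys p" "Poly_Mapping.keys q"]
        sscale_sum algebra_simps)
qed

lemma sprod_single_single:
  "sprod m (Poly_Mapping.single a c) (Poly_Mapping.single b d) =
     Poly_Mapping.single (a + b) (c * d * msign m a b)"
  by (subst sprod_eq_sum_superset[of "{a}" "{b}"]) auto

lemma msign_zero_left [simp]: "msign m 0 b = 1"
  by (simp add: msign_def)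

lemma msign_zero_right [simp]: "msign m a 0 = 1"
  by (simp add: msign_def)

lemma sone_sprod [simp]: "sprod m sone p = p"
proof -
  have "sprod m sone p =
      (\<Sum>b\<in>Poly_Mapping.keys p. Poly_Mapping.single b (Poly_Mapping.lookup p b))"
    unfolding sone_def by (subst sprod_eq_sum_superset[of "{0}" "Poly_Mapping.keys p"]) auto
  also have "\<dots> = p"
    by (rule poly_mapping_eqI)
      (auto simp: lookup_sum lookup_single when_def in_keys_iff intro: sum.neutral split: if_splits)
  finally show ?thesis .
qed

lemma sprod_sone [simp]: "sprod m p sone = p"
proof -
  have "sprod m p sone =
      (\<Sum>b\<in>Poly_Mapping.keys p. Poly_Mapping.single b (Poly_Mapping.lookup p b))"
    unfolding sone_def by (subst sprod_eq_sum_superset[of "Poly_Mapping.keys p" "{0}"]) auto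
  also have "\<dots> = p"
    by (rule poly_mapping_eqI)
      (auto simp: lookup_sum lookup_single when_def in_keys_iff intro: sum.neutral split: if_splits)
  finally show ?thesis .
qed

section \<open>Products of generators\<close>

lemma keys_add_nat:
  "Poly_Mapping.keys (f + g :: 'a \<Rightarrow>\<^sub>0 nat) = Poly_Mapping.keys f \<union> Poly_Mapping.keys g"
  by (auto simp: in_keys_iff lookup_add)

definition gen_prod :: "nat \<Rightarrow> (nat \<times> nat) list \<Rightarrow> salg" where
  "gen_prod m gs = sprod_list m (map (case_prod gen) gs)"

definition gen_monom :: "(nat \<times> nat) list \<Rightarrow> smon" where
  "gen_monom gs = (\<Sum>g\<leftarrow>gs. Poly_Mapping.single g 1)"

fun gen_coeff :: "nat \<Rightarrow> (nat \<times> nat) list \<Rightarrow> complex" where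
  "gen_coeff m [] = 1"
| "gen_coeff m (g # gs) = msign m (Poly_Mapping.single g 1) (gen_monom gs) * gen_coeff m gs"

lemma gen_monom_Nil [simp]: "gen_monom [] = 0"
  by (simp add: gen_monom_def)

lemma gen_monom_Cons [simp]: "gen_monom (g # gs) = Poly_Mapping.single g 1 + gen_monom gs"
  by (simp add: gen_monom_def)

lemma gen_monom_append [simp]: "gen_monom (gs @ hs) = gen_monom gs + gen_monom hs"
  by (simp add: gen_monom_def)

lemma keys_gen_monom [simp]: "Poly_Mapping.keys (gen_monom gs) = set gs"
  by (induction gs) (auto simp: keys_add_nat)

lemma gen_monom_permute_list:
  assumes "x permutes {..<length gs}"
  shows "gen_monom (permute_list x gs) = gen_monom gs"
  using assms by (simp add: gen_monom_def sum_mset_sum_list[symmetric] permute_list_map[symmetric])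

lemma gen_prod_Nil [simp]: "gen_prod m [] = sone"
  by (simp add: gen_prod_def sprod_list_def)

lemma gen_prod_eq_single: "gen_prod m gs = Poly_Mapping.single (gen_monom gs) (gen_coeff m gs)"
proof (induction gs)
  case Nil
  then show ?case by (simp add: sone_def)
next
  case (Cons g gs)
  have "gen_prod m (g # gs) = sprod m (case_prod gen g) (gen_prod m gs)"
    by (simp add: gen_prod_def sprod_list_def)
  then show ?case
    by (simp add: Cons gen_def sprod_single_single mult.commute split: prod.split)
qed

lemma msign_cocycle: "msign m a (b + c) * msign m b c = msign m a b * msign m (a + b) c"
proof -
  let ?A = "Poly_Mapping.keys a" and ?B = "Poly_Mapping.keys b" and ?C = "Poly_Mapping.keys c"
  have kbc: "Poly_Mapping.keys (b + c) = ?B \<union> ?C" and kab: "Poly_Mapping.keys (a + b) = ?A \<union> ?B"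
    by (simp_all add: keys_add_nat)
  define P where "P X Y = {(g, h). g \<in> X \<and> h \<in> Y \<and> oddgen m g \<and> oddgen m h \<and> h < g}" for X Y
  have fin: "finite (P X Y)" if "finite X" "finite Y" for X Y
    by (rule finite_subset[of _ "X \<times> Y"]) (use that in \<open>auto simp: P_def\<close>)
  show ?thesis
  proof (cases "\<exists>g \<in> ?A \<inter> ?B \<union> ?A \<inter> ?C \<union> ?B \<inter> ?C. oddgen m g")
    case True
    then show ?thesis unfolding msign_def kbc kab by auto
  next
    case False
    have "P ?A (?B \<union> ?C) = P ?A ?B \<union> P ?A ?C" "P ?A ?B \<inter> P ?A ?C = {}"
      and "P (?A \<union> ?B) ?C = P ?A ?C \<union> P ?B ?C" "P ?A ?C \<inter> P ?B ?C = {}"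
      using False by (auto simp: P_def)
    then have c1: "card (P ?A (?B \<union> ?C)) = card (P ?A ?B) + card (P ?A ?C)"
      and c2: "card (P (?A \<union> ?B) ?C) = card (P ?A ?C) + card (P ?B ?C)"
      by (simp_all add: card_Un_disjoint fin)
    have "msign m a (b + c) * msign m b c = (-1) ^ (card (P ?A (?B \<union> ?C)) + card (P ?B ?C))"
      using False unfolding msign_def kbc P_def by (simp add: power_add)
    also have "\<dots> = (-1) ^ (card (P ?A ?B) + card (P (?A \<union> ?B) ?C))"
      unfolding c1 c2 by (simp add: algebra_simps)
    also have "\<dots> = msign m a b * msign m (a + b) c"
      using False unfolding msign_def kab P_def by (simp add: power_add)
    finally show ?thesis .
  qed
qed

lemma gen_coeff_append:
  "gen_coeff m (gs @ hs) = gen_coeff m gs * gen_coeff m hs * msign m (gen_monom gs) (gen_monom hs)"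
proof (induction gs)
  case Nil
  then show ?case by simp
next
  case (Cons g gs)
  let ?g = "Poly_Mapping.single g 1"
  have "gen_coeff m ((g # gs) @ hs) = gen_coeff m gs * gen_coeff m hs *
      (msign m ?g (gen_monom gs + gen_monom hs) * msign m (gen_monom gs) (gen_monom hs))"
    by (simp add: Cons algebra_simps)
  also have "\<dots> = gen_coeff m gs * gen_coeff m hs *
      (msign m ?g (gen_monom gs) * msign m (?g + gen_monom gs) (gen_monom hs))"
    by (simp only: msign_cocycle)
  also have "\<dots> = gen_coeff m (g # gs) * gen_coeff m hs * msign m (gen_monom (g # gs)) (gen_monom hs)"
    by (simp add: algebra_simps)
  finally show ?case .
qed

lemma gen_prod_append: "gen_prod m (gs @ hs) = sprod m (gen_prod m gs) (gen_prod m hs)"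
  by (simp add: gen_prod_eq_single sprod_single_single gen_coeff_append)

lemma gen_prod_snoc: "gen_prod m (gs @ [(i, j)]) = sprod m (gen_prod m gs) (gen i j)"
  unfolding gen_prod_append by (simp add: gen_prod_def sprod_list_def)

definition odd_distinct :: "nat \<Rightarrow> (nat \<times> nat) list \<Rightarrow> bool" where
  "odd_distinct m gs \<longleftrightarrow> (\<forall>g. oddgen m g \<longrightarrow> count_list gs g \<le> 1)"

definition odd_inversions :: "nat \<Rightarrow> (nat \<times> nat) list \<Rightarrow> nat" where
  "odd_inversions m gs = (\<Sum>p<length gs. \<Sum>q<length gs.
     if p < q \<and> oddgen m (gs ! p) \<and> oddgen m (gs ! q) \<and> gs ! q < gs ! p then 1 else 0)"

lemma odd_distinct_Cons:
  "odd_distinct m (g # gs) \<longleftrightarrow> (oddgen m g \<longrightarrow> g \<notin> set gs) \<and> odd_distinct m gs"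
proof -
  have "count_list (g # gs) h \<le> 1 \<longleftrightarrow> count_list gs h \<le> 1 \<and> (h = g \<longrightarrow> g \<notin> set gs)" for h
    by (auto simp: count_list_0_iff[symmetric])
  then show ?thesis
    unfolding odd_distinct_def by blast
qed

lemma odd_distinct_nth:
  assumes "odd_distinct m gs" "p < length gs" "q < length gs" "p \<noteq> q" "oddgen m (gs ! p)"
  shows "gs ! p \<noteq> gs ! q"
proof
  assume eq: "gs ! p = gs ! q"
  have "card {p, q} \<le> card {i. i < length gs \<and> gs ! p = gs ! i}"
    by (rule card_mono) (use assms eq in auto)
  also have "\<dots> = count_list gs (gs ! p)"
    by (simp add: count_list_eq_length_filter length_filter_conv_card)
  finally show False
    using assms unfolding odd_distinct_def by fastforce
qed

lemma odd_distinct_permute_list: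
  "x permutes {..<length gs} \<Longrightarrow> odd_distinct m (permute_list x gs) \<longleftrightarrow> odd_distinct m gs"
  by (simp add: odd_distinct_def count_mset[symmetric])

lemma odd_inversions_Cons:
  "odd_inversions m (g # gs) =
     (\<Sum>q<length gs. if oddgen m g \<and> oddgen m (gs ! q) \<and> gs ! q < g then 1 else 0) + odd_inversions m gs"
  unfolding odd_inversions_def length_Cons sum.lessThan_Suc_shift
  by (simp del: sum.lessThan_Suc add: sum.distrib)

lemma msign_single:
  "msign m (Poly_Mapping.single g 1) B =
     (if \<not> oddgen m g then 1 else if g \<in> Poly_Mapping.keys B then 0
      else (-1) ^ card {h \<in> Poly_Mapping.keys B. oddgen m h \<and> h < g})"
proof -
  have "{(g', h). g' = g \<and> h \<in> Poly_Mapping.keys B \<and> oddgen m g' \<and> oddgen m h \<and> h < g'} =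
      (if oddgen m g then Pair g ` {h \<in> Poly_Mapping.keys B. oddgen m h \<and> h < g} else {})"
    by auto
  then show ?thesis
    unfolding msign_def by (simp add: card_image inj_on_def)
qed

lemma count_odd_less:
  assumes "odd_distinct m gs"
  shows "(\<Sum>q<length gs. if oddgen m (gs ! q) \<and> gs ! q < g then 1 else 0) =
         card {h \<in> set gs. oddgen m h \<and> h < g}"
proof -
  have "(\<Sum>q<length gs. if oddgen m (gs ! q) \<and> gs ! q < g then 1 else 0) =
        card {q \<in> {..<length gs}. oddgen m (gs ! q) \<and> gs ! q < g}"
    by (simp add: sum.If_cases Int_def)
  also have "\<dots> = card ((!) gs ` {q \<in> {..<length gs}. oddgen m (gs ! q) \<and> gs ! q < g})"
    by (rule card_image[symmetric]) (use assms odd_distinct_nth in \<open>fastforce simp: inj_on_def\<close>)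
  also have "(!) gs ` {q \<in> {..<length gs}. oddgen m (gs ! q) \<and> gs ! q < g} =
             {h \<in> set gs. oddgen m h \<and> h < g}"
    by (auto simp: in_set_conv_nth image_iff) metis
  finally show ?thesis .
qed

lemma gen_coeff_eq: "gen_coeff m gs = (if odd_distinct m gs then (-1) ^ odd_inversions m gs else 0)"
proof (induction gs)
  case Nil
  then show ?case by (simp add: odd_distinct_def odd_inversions_def)
next
  case (Cons g gs)
  then show ?case
    using msign_single[of m g "gen_monom gs"]
    by (auto simp: odd_distinct_Cons odd_inversions_Cons count_odd_less power_add)
qed

lemma neg_one_power_eq: "even (a + b) \<Longrightarrow> (-1 :: 'a :: ring_1) ^ a = (-1) ^ b"
  by (metis even_add neg_one_even_power neg_one_odd_power)

definition pair_sum :: "nat \<Rightarrow> (nat \<Rightarrow> nat \<Rightarrow> 'a :: comm_monoid_add) \<Rightarrow> 'a" where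
  "pair_sum n F = (\<Sum>a<n. \<Sum>b<n. if a < b then F a b else 0)"

definition inversion_sum :: "(nat \<Rightarrow> nat) \<Rightarrow> nat \<Rightarrow> (nat \<Rightarrow> nat \<Rightarrow> 'a :: comm_monoid_add) \<Rightarrow> 'a" where
  "inversion_sum \<pi> n W = pair_sum n (\<lambda>a b. if \<pi> b < \<pi> a then W a b else 0)"

lemma pair_sum_cong:
  "(\<And>a b. a < b \<Longrightarrow> b < n \<Longrightarrow> F a b = G a b) \<Longrightarrow> pair_sum n F = pair_sum n G"
  unfolding pair_sum_def by (intro sum.cong refl) auto

lemma pair_sum_add: "pair_sum n (\<lambda>a b. F a b + G a b) = pair_sum n F + pair_sum n G"
  unfolding pair_sum_def sum.distrib[symmetric] by (intro sum.cong refl) simp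

lemma even_pair_sum: "(\<And>a b. a < b \<Longrightarrow> b < n \<Longrightarrow> even (F a b)) \<Longrightarrow> even (pair_sum n F)"
  unfolding pair_sum_def by (intro dvd_sum) auto

lemma sum_triangle_eq_pair_sum: "(\<Sum>q<n. \<Sum>p<q. F p q) = pair_sum n F"
proof -
  have "(\<Sum>p<q. F p q) = (\<Sum>p<n. if p < q then F p q else 0)" if "q < n" for q
  proof -
    have "{..<n} \<inter> {p. p < q} = {..<q}"
      using that by auto
    then show ?thesis
      by (simp add: sum.If_cases)
  qed
  then have "(\<Sum>q<n. \<Sum>p<q. F p q) = (\<Sum>q<n. \<Sum>p<n. if p < q then F p q else 0)"
    by simp
  also have "\<dots> = pair_sum n F"
    unfolding pair_sum_def by (rule sum.swap)
  finally show ?thesis .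
qed

lemma inversion_sum_add:
  "inversion_sum \<pi> n (\<lambda>a b. F a b + G a b) = inversion_sum \<pi> n F + inversion_sum \<pi> n G"
  unfolding inversion_sum_def pair_sum_add[symmetric] by (intro arg_cong[of _ _ "pair_sum n"] ext) simp

(* Reordering the positions by x changes a sum over ordered pairs only on the pairs inverted
   by inv x, where F a b is traded for F b a. *)

lemma even_pair_sum_permute:
  fixes F :: "nat \<Rightarrow> nat \<Rightarrow> nat"
  assumes x: "x permutes {..<n}"
  shows "even (pair_sum n (\<lambda>p q. F (x p) (x q)) + pair_sum n F + inversion_sum (inv x) n (\<lambda>a b. F a b + F b a))"
proof -
  let ?i = "inv x"
  define G where "G a b = (if ?i a < ?i b then F a b else 0)" for a b
  have ix: "?i (x p) = p" for p
    using x by (simp add: permutes_inverses(2))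
  have i_inj: "?i a \<noteq> ?i b" if "a \<noteq> b" for a b
    using that x by (metis permutes_inverses(1))
  have bij: "bij_betw x {..<n} {..<n}"
    using x by (rule permutes_imp_bij)
  have "pair_sum n (\<lambda>p q. F (x p) (x q)) = (\<Sum>p<n. \<Sum>q<n. G (x p) (x q))"
    unfolding pair_sum_def by (simp add: G_def ix)
  also have "\<dots> = (\<Sum>p<n. \<Sum>b<n. G (x p) b)"
    by (intro sum.cong refl sum.reindex_bij_betw[OF bij])
  also have "\<dots> = (\<Sum>a<n. \<Sum>b<n. G a b)"
    by (rule sum.reindex_bij_betw[OF bij, where g = "\<lambda>a. \<Sum>b<n. G a b"])
  also have "\<dots> = (\<Sum>a<n. \<Sum>b<n. (if a < b then G a b else 0) + (if b < a then G a b else 0))"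
    by (intro sum.cong refl) (auto simp: G_def)
  also have "\<dots> = pair_sum n G + (\<Sum>a<n. \<Sum>b<n. if b < a then G a b else 0)"
    by (simp add: sum.distrib pair_sum_def)
  also have "(\<Sum>a<n. \<Sum>b<n. if b < a then G a b else 0) = (\<Sum>b<n. \<Sum>a<n. if b < a then G a b else 0)"
    by (rule sum.swap)
  also have "(\<Sum>b<n. \<Sum>a<n. if b < a then G a b else 0) = inversion_sum ?i n (\<lambda>a b. F b a)"
    by (simp add: inversion_sum_def pair_sum_def G_def if_distrib[of "\<lambda>c. c = 0"] cong: if_cong)
  finally have S1: "pair_sum n (\<lambda>p q. F (x p) (x q)) = pair_sum n G + inversion_sum ?i n (\<lambda>a b. F b a)" .
  have "pair_sum n F = pair_sum n (\<lambda>a b. G a b + (if ?i b < ?i a then F a b else 0))"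
    unfolding pair_sum_def by (intro sum.cong refl) (use i_inj in \<open>auto simp: G_def\<close>)
  then have S2: "pair_sum n F = pair_sum n G + inversion_sum ?i n F"
    by (simp add: pair_sum_add inversion_sum_def)
  have "inversion_sum ?i n (\<lambda>a b. F a b + F b a) = inversion_sum ?i n F + inversion_sum ?i n (\<lambda>a b. F b a)"
    by (rule inversion_sum_add)
  with S1 S2 show ?thesis
    by presburger
qed

lemma even_pair_sum_permute_sym:
  fixes F :: "nat \<Rightarrow> nat \<Rightarrow> nat"
  assumes x: "x permutes {..<n}" and sym: "\<And>a b. F a b = F b a"
  shows "even (pair_sum n (\<lambda>p q. F (x p) (x q)) + pair_sum n F)"
proof -
  have "even (inversion_sum (inv x) n (\<lambda>a b. F a b + F b a))"
    unfolding inversion_sum_def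
  proof (rule even_pair_sum)
    show "even (if inv x b < inv x a then F a b + F b a else 0)" for a b
      using sym[of b a] by simp
  qed
  then show ?thesis
    using even_pair_sum_permute[OF x, of F] by simp
qed

lemma gen_prod_permute_list:
  assumes x: "x permutes {..<length gs}"
  shows "gen_prod m (permute_list x gs) =
    sscale ((-1) ^ inversion_sum (inv x) (length gs)
        (\<lambda>a b. if oddgen m (gs ! a) \<and> oddgen m (gs ! b) then 1 else 0))
      (gen_prod m gs)"
proof (cases "odd_distinct m gs")
  case False
  then show ?thesis
    using x by (simp add: gen_prod_eq_single gen_coeff_eq odd_distinct_permute_list)
next
  case True
  let ?n = "length gs"
  define F where "F a b = (if oddgen m (gs ! a) \<and> oddgen m (gs ! b) \<and> gs ! b < gs ! a then 1 else 0 :: nat)"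
    for a b
  have "odd_inversions m (permute_list x gs) = pair_sum ?n (\<lambda>p q. F (x p) (x q))"
    unfolding odd_inversions_def pair_sum_def F_def
    by (intro sum.cong refl) (use x in \<open>auto simp: permute_list_nth permutes_in_image\<close>)
  moreover have "odd_inversions m gs = pair_sum ?n F"
    unfolding odd_inversions_def pair_sum_def F_def by (intro sum.cong refl) simp
  moreover have "inversion_sum (inv x) ?n (\<lambda>a b. F a b + F b a) =
      inversion_sum (inv x) ?n (\<lambda>a b. if oddgen m (gs ! a) \<and> oddgen m (gs ! b) then 1 else 0)"
    unfolding inversion_sum_def
  proof (rule pair_sum_cong)
    fix a b assume "a < b" "b < ?n"
    then have "oddgen m (gs ! a) \<Longrightarrow> gs ! a \<noteq> gs ! b"
      using odd_distinct_nth[OF True] by simp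
    then show "(if inv x b < inv x a then F a b + F b a else 0) =
        (if inv x b < inv x a then if oddgen m (gs ! a) \<and> oddgen m (gs ! b) then 1 else 0 else 0)"
      by (auto simp: F_def)
  qed
  ultimately have "even (odd_inversions m (permute_list x gs) + odd_inversions m gs +
      inversion_sum (inv x) ?n (\<lambda>a b. if oddgen m (gs ! a) \<and> oddgen m (gs ! b) then 1 else 0))"
    using even_pair_sum_permute[OF x, of F] by (simp only:)
  then have "(-1::complex) ^ odd_inversions m (permute_list x gs) =
      (-1) ^ (inversion_sum (inv x) ?n (\<lambda>a b. if oddgen m (gs ! a) \<and> oddgen m (gs ! b) then 1 else 0)
      + odd_inversions m gs)"
    by (intro neg_one_power_eq) presburger
  then show ?thesis
    using x True
    by (simp add: gen_prod_eq_single gen_coeff_eq odd_distinct_permute_list gen_monom_permute_list power_add)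
qed

section \<open>Matrix entries of \<open>X\<^sub>1 \<cdots> X\<^sub>k\<close>\<close>

lemma finite_idx [simp]: "finite (idx m n k)"
proof -
  have "idx m n k = {xs. set xs \<subseteq> {1..m+n} \<and> length xs = k}"
    by (auto simp: idx_def)
  then show ?thesis
    by (simp add: finite_lists_length_eq)
qed

lemma list_update_in_idx: "J \<in> idx m n k \<Longrightarrow> c \<in> {1..m+n} \<Longrightarrow> J[r := c] \<in> idx m n k"
  using set_update_subset_insert[of J r c] unfolding idx_def by auto

lemma nth_in_idx:
  assumes "I \<in> idx m n k" "r < k"
  shows "I ! r \<in> {1..m+n}"
proof (rule subsetD)
  show "set I \<subseteq> {1..m+n}" and "I ! r \<in> set I"
    using assms by (simp_all add: idx_def)
qed

lemma eP_same [simp]: "eP m i i = 0"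
  by (simp add: eP_def)

lemma eP_sym: "eP m i j = eP m j i"
  by (simp add: eP_def add.commute)

(* Only K = J[r := I ! r] contributes: X_r only changes position r, and P is supported on
   pairs agreeing from position r on. *)
lemma tmul_Xop_entry:
  assumes r: "r < k" and I: "I \<in> idx m n k" and J: "J \<in> idx m n k"
    and P: "\<And>K. K \<in> idx m n k \<Longrightarrow> P I K \<noteq> 0 \<Longrightarrow> \<forall>p. r \<le> p \<and> p < k \<longrightarrow> I ! p = K ! p"
  defines "K0 \<equiv> J[r := I ! r]"
  shows "tmul m n k P (Xop k r) I J =
    (if \<forall>p. r < p \<and> p < k \<longrightarrow> I ! p = J ! p
     then sscale ((-1) ^ (tpar m I K0 * tpar m K0 J + cross m I K0 J))
       (sprod m (P I K0) (gen (I ! r) (J ! r)))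
     else 0)"
proof -
  define T where "T K = sscale ((-1) ^ (tpar m I K * tpar m K J + cross m I K J))
      (sprod m (P I K) (Xop k r K J))" for K
  have lI: "length I = k" and lJ: "length J = k"
    using I J by (auto simp: idx_def)
  have K0: "K0 \<in> idx m n k"
    unfolding K0_def using list_update_in_idx[OF J nth_in_idx[OF I r]] .
  have T0: "T K = 0" if K: "K \<in> idx m n k"
    and "K \<noteq> K0 \<or> \<not> (\<forall>p. r < p \<and> p < k \<longrightarrow> I ! p = J ! p)" for K
  proof (rule ccontr)
    assume "T K \<noteq> 0"
    then have "P I K \<noteq> 0" "Xop k r K J \<noteq> 0"
      by (auto simp: T_def)
    then have agree: "\<forall>p. r \<le> p \<and> p < k \<longrightarrow> I ! p = K ! p"
      and off: "\<forall>b<k. b \<noteq> r \<longrightarrow> K ! b = J ! b"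
      using P[OF K] by (auto simp: Xop_def split: if_splits)
    have lK: "length K = k"
      using K by (simp add: idx_def)
    have "K = K0"
    proof (rule nth_equalityI)
      show "K ! i = K0 ! i" if "i < length K" for i
        using that agree off lJ lK r by (cases "i = r") (auto simp: K0_def)
    qed (simp add: K0_def lJ lK)
    moreover have "\<forall>p. r < p \<and> p < k \<longrightarrow> I ! p = J ! p"
      using agree off by auto
    ultimately show False
      using that by blast
  qed
  have "tmul m n k P (Xop k r) I J = (\<Sum>K\<in>idx m n k. T K)"
    by (simp add: tmul_def T_def)
  also have "\<dots> = (if \<forall>p. r < p \<and> p < k \<longrightarrow> I ! p = J ! p then T K0 else 0)"
  proof (cases "\<forall>p. r < p \<and> p < k \<longrightarrow> I ! p = J ! p")
    case True
    then have "(\<Sum>K\<in>idx m n k. T K) = (\<Sum>K\<in>{K0}. T K)"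
      using K0 T0 by (intro sum.mono_neutral_right) auto
    then show ?thesis
      using True by simp
  next
    case False
    then show ?thesis
      using T0 by (subst if_not_P) (auto intro!: sum.neutral)
  qed
  also have "T K0 = sscale ((-1) ^ (tpar m I K0 * tpar m K0 J + cross m I K0 J))
       (sprod m (P I K0) (gen (I ! r) (J ! r)))"
  proof -
    have "Xop k r K0 J = gen (I ! r) (J ! r)"
      using r lJ by (auto simp: Xop_def K0_def)
    then show ?thesis
      by (simp add: T_def)
  qed
  finally show ?thesis .
qed

(* The Koszul sign of X_1 ... X_k: the coefficient at position p passes the matrix units at
   the earlier positions, whose parities are those of their coefficients. *)
lemma sum_lessThan_eq_upto:
  fixes r k :: nat
  assumes "r < k" and "\<And>q. r < q \<Longrightarrow> q < k \<Longrightarrow> f q = 0"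
  shows "(\<Sum>q<k. f q) = (\<Sum>q<r. f q) + f r"
proof -
  have "(\<Sum>q<k. f q) = (\<Sum>q<Suc r. f q)"
    by (rule sum.mono_neutral_right) (use assms in auto)
  then show ?thesis
    by simp
qed

definition xprod_exp :: "nat \<Rightarrow> nat list \<Rightarrow> nat list \<Rightarrow> nat" where
  "xprod_exp m I J = (\<Sum>p<length I. (\<Sum>q<p. eP m (I ! q) (J ! q)) * eP m (I ! p) (J ! p))"

lemma xprod_exp_update:
  assumes r: "r < k" and lI: "length I = k" and lJ: "length J = k"
    and agree: "\<forall>p. r < p \<and> p < k \<longrightarrow> I ! p = J ! p"
  defines "K0 \<equiv> J[r := I ! r]"
  shows "tpar m I K0 * tpar m K0 J + cross m I K0 J + xprod_exp m I K0 = xprod_exp m I J"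
proof -
  define e where "e q = eP m (I ! q) (J ! q)" for q
  have e0: "e q = 0" if "r < q" "q < k" for q
    using agree that by (simp add: e_def)
  have K0: "K0 ! q = (if q = r then I ! r else J ! q)" if "q < k" for q
    using that by (simp add: K0_def lJ)
  note split_r = sum_lessThan_eq_upto[OF r]
  have "tpar m I K0 = (\<Sum>q<k. if q = r then 0 else e q)"
    unfolding tpar_def lI by (intro sum.cong refl) (simp add: K0 e_def)
  also have "\<dots> = (\<Sum>q<r. e q)"
    by (subst split_r) (auto simp: e0)
  finally have tp1: "tpar m I K0 = (\<Sum>q<r. e q)" .
  have "tpar m K0 J = (\<Sum>q<k. if q = r then e r else 0)"
    unfolding tpar_def K0_def length_list_update lJ
    by (intro sum.cong refl) (simp add: e_def lJ)
  then have tp2: "tpar m K0 J = e r"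
    using r by simp
  have cr: "cross m I K0 J = 0"
    unfolding cross_def lI
    by (intro sum.neutral ballI) (auto simp: K0 e0[unfolded e_def] less_trans[of _ _ k])
  have "xprod_exp m I K0 = (\<Sum>p<k. (\<Sum>q<p. e q) * (if p = r then 0 else e p))"
    unfolding xprod_exp_def lI
  proof (intro sum.cong refl)
    fix p assume p: "p \<in> {..<k}"
    show "(\<Sum>q<p. eP m (I ! q) (K0 ! q)) * eP m (I ! p) (K0 ! p) = (\<Sum>q<p. e q) * (if p = r then 0 else e p)"
    proof (cases "p \<le> r")
      case True
      then have "(\<Sum>q<p. eP m (I ! q) (K0 ! q)) = (\<Sum>q<p. e q)"
        using p by (intro sum.cong refl) (auto simp: K0 e_def)
      then show ?thesis
        using p by (simp add: K0 e_def)
    next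
      case False
      then show ?thesis
        using p e0[of p] by (simp add: K0 e_def)
    qed
  qed
  also have "\<dots> = (\<Sum>p<r. (\<Sum>q<p. e q) * e p)"
    by (subst split_r) (auto simp: e0)
  finally have ex1: "xprod_exp m I K0 = (\<Sum>p<r. (\<Sum>q<p. e q) * e p)" .
  have ex2: "xprod_exp m I J = (\<Sum>p<r. (\<Sum>q<p. e q) * e p) + (\<Sum>q<r. e q) * e r"
    unfolding xprod_exp_def lI e_def[symmetric] by (rule split_r) (simp add: e0)
  show ?thesis
    unfolding tp1 tp2 cr ex1 ex2 by simp
qed

lemma Xop_prefix_prod_entry:
  assumes "r \<le> k" "I \<in> idx m n k" "J \<in> idx m n k"
  shows "foldl (tmul m n k) tone (map (Xop k) [0..<r]) I J =
    (if \<forall>p. r \<le> p \<and> p < k \<longrightarrow> I ! p = J ! p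
     then sscale ((-1) ^ xprod_exp m I J) (gen_prod m (zip (take r I) (take r J))) else 0)"
  using assms
proof (induction r arbitrary: J)
  case 0
  then have "(\<forall>p. 0 \<le> p \<and> p < k \<longrightarrow> I ! p = J ! p) \<longleftrightarrow> I = J"
    by (auto simp: idx_def intro: nth_equalityI)
  then show ?case
    by (simp add: tone_def xprod_exp_def)
next
  case (Suc r)
  let ?P = "foldl (tmul m n k) tone (map (Xop k) [0..<r])"
  define K0 where "K0 = J[r := I ! r]"
  have r: "r < k"
    using Suc by simp
  have lI: "length I = k" and lJ: "length J = k"
    using Suc.prems by (auto simp: idx_def)
  have IH: "?P I K = (if \<forall>p. r \<le> p \<and> p < k \<longrightarrow> I ! p = K ! p
      then sscale ((-1) ^ xprod_exp m I K) (gen_prod m (zip (take r I) (take r K))) else 0)"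
    if "K \<in> idx m n k" for K
    using Suc.IH[OF _ Suc.prems(2) that] r by simp
  have cond: "(\<forall>p. Suc r \<le> p \<and> p < k \<longrightarrow> I ! p = J ! p) \<longleftrightarrow> (\<forall>p. r < p \<and> p < k \<longrightarrow> I ! p = J ! p)"
    by (simp add: Suc_le_eq)
  have "foldl (tmul m n k) tone (map (Xop k) [0..<Suc r]) I J = tmul m n k ?P (Xop k r) I J"
    by simp
  also have "\<dots> = (if \<forall>p. r < p \<and> p < k \<longrightarrow> I ! p = J ! p
     then sscale ((-1) ^ (tpar m I K0 * tpar m K0 J + cross m I K0 J))
       (sprod m (?P I K0) (gen (I ! r) (J ! r)))
     else 0)"
    unfolding K0_def
    by (rule tmul_Xop_entry[OF r Suc.prems(2,3)]) (auto simp: IH split: if_splits)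
  also have "\<dots> = (if \<forall>p. Suc r \<le> p \<and> p < k \<longrightarrow> I ! p = J ! p
     then sscale ((-1) ^ xprod_exp m I J) (gen_prod m (zip (take (Suc r) I) (take (Suc r) J))) else 0)"
    unfolding cond
  proof (rule if_cong[OF refl _ refl])
    assume agree: "\<forall>p. r < p \<and> p < k \<longrightarrow> I ! p = J ! p"
    have "K0 \<in> idx m n k"
      unfolding K0_def using list_update_in_idx[OF Suc.prems(3) nth_in_idx[OF Suc.prems(2) r]] .
    moreover have "\<forall>p. r \<le> p \<and> p < k \<longrightarrow> I ! p = K0 ! p"
      unfolding K0_def using agree lJ by (auto simp: nth_list_update)
    moreover have "take r K0 = take r J"
      by (simp add: K0_def)
    ultimately have "?P I K0 = sscale ((-1) ^ xprod_exp m I K0) (gen_prod m (zip (take r I) (take r J)))"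
      using IH by presburger
    moreover have "zip (take (Suc r) I) (take (Suc r) J) = zip (take r I) (take r J) @ [(I ! r, J ! r)]"
      using r lI lJ by (simp add: take_Suc_conv_app_nth)
    ultimately have "sprod m (?P I K0) (gen (I ! r) (J ! r)) =
        sscale ((-1) ^ xprod_exp m I K0) (gen_prod m (zip (take (Suc r) I) (take (Suc r) J)))"
      by (simp only: sprod_sscale_left gen_prod_snoc)
    moreover have "(-1::complex) ^ (tpar m I K0 * tpar m K0 J + cross m I K0 J) * (-1) ^ xprod_exp m I K0 =
        (-1) ^ xprod_exp m I J"
      unfolding power_add[symmetric] K0_def by (rule arg_cong[OF xprod_exp_update[OF r lI lJ agree]])
    ultimately show "sscale ((-1) ^ (tpar m I K0 * tpar m K0 J + cross m I K0 J)) (sprod m (?P I K0) (gen (I ! r) (J ! r))) =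
        sscale ((-1) ^ xprod_exp m I J) (gen_prod m (zip (take (Suc r) I) (take (Suc r) J)))"
      by simp
  qed
  finally show ?case .
qed

lemma Xprod_entry:
  assumes "I \<in> idx m n k" "J \<in> idx m n k"
  shows "Xprod m n k I J = sscale ((-1) ^ xprod_exp m I J) (gen_prod m (zip I J))"
  using Xop_prefix_prod_entry[OF le_refl assms] assms by (simp add: Xprod_def idx_def)

section \<open>Immanants as sums over permutations\<close>

lemma permutes_lessThan_less: "\<sigma> permutes {..<k} \<Longrightarrow> q < k \<Longrightarrow> \<sigma> q < k"
  by (metis lessThan_iff permutes_in_image)

lemma perm_mat_eq:
  assumes s: "\<sigma> permutes {..<k}" and lI: "length I = k" and lK: "length K = k"
  shows "perm_mat m \<sigma> I K = (if K = permute_list \<sigma> I then (-1) ^ Ibar m \<sigma> K else 0)"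
proof -
  have s': "inv \<sigma> permutes {..<k}"
    using s by (rule permutes_inv)
  have "I = map (\<lambda>p. K ! inv \<sigma> p) [0..<k] \<longleftrightarrow> K = permute_list \<sigma> I"
  proof
    assume I: "I = map (\<lambda>p. K ! inv \<sigma> p) [0..<k]"
    show "K = permute_list \<sigma> I"
    proof (rule nth_equalityI)
      show "K ! q = permute_list \<sigma> I ! q" if "q < length K" for q
        using that lK lI I s permutes_lessThan_less[OF s, of q]
        by (simp add: permute_list_nth permutes_inverses(2))
    qed (simp add: lI lK)
  next
    assume K: "K = permute_list \<sigma> I"
    show "I = map (\<lambda>p. K ! inv \<sigma> p) [0..<k]"
    proof (rule nth_equalityI)
      show "I ! p = map (\<lambda>p. K ! inv \<sigma> p) [0..<k] ! p" if "p < length I" for p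
        using that lI K s permutes_lessThan_less[OF s', of p]
        by (simp add: permute_list_nth permutes_inverses(1))
    qed (simp add: lI)
  qed
  then show ?thesis
    by (simp add: perm_mat_def lK)
qed

lemma tmul_chi_tens_Xprod_diag:
  assumes I: "I \<in> idx m n k"
  shows "tmul m n k (chi_tens m n k \<chi>) (Xprod m n k) I I =
    (\<Sum>\<sigma> | \<sigma> permutes {..<k}.
       sscale (\<chi> \<sigma> * (-1) ^ (tpar m I (permute_list \<sigma> I) * tpar m (permute_list \<sigma> I) I
           + cross m I (permute_list \<sigma> I) I + sE m I (permute_list \<sigma> I)
           + Ibar m \<sigma> (permute_list \<sigma> I) + xprod_exp m (permute_list \<sigma> I) I))
         (gen_prod m (zip (permute_list \<sigma> I) I)))"
proof -
  let ?S = "{\<sigma>. \<sigma> permutes {..<k}}"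
  define c where "c \<sigma> K = \<chi> \<sigma> * (-1) ^ (tpar m I K * tpar m K I + cross m I K I + sE m I K + Ibar m \<sigma> K)"
    for \<sigma> K
  have lI: "length I = k"
    using I by (simp add: idx_def)
  have "tmul m n k (chi_tens m n k \<chi>) (Xprod m n k) I I =
      (\<Sum>K\<in>idx m n k. \<Sum>\<sigma>\<in>?S. if K = permute_list \<sigma> I then sscale (c \<sigma> K) (Xprod m n k K I) else 0)"
    unfolding tmul_def chi_tens_def sprod_sum_left sscale_sum
    by (intro sum.cong refl) (auto simp: idx_def lI perm_mat_eq sprod_sscale_left c_def power_add ac_simps)
  also have "\<dots> = (\<Sum>\<sigma>\<in>?S. \<Sum>K\<in>idx m n k. if K = permute_list \<sigma> I then sscale (c \<sigma> K) (Xprod m n k K I) else 0)"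
    by (rule sum.swap)
  also have "\<dots> = (\<Sum>\<sigma>\<in>?S. sscale (c \<sigma> (permute_list \<sigma> I)) (Xprod m n k (permute_list \<sigma> I) I))"
  proof (rule sum.cong[OF refl])
    fix \<sigma> assume "\<sigma> \<in> ?S"
    then have "permute_list \<sigma> I \<in> idx m n k"
      using I lI by (simp add: idx_def)
    then show "(\<Sum>K\<in>idx m n k. if K = permute_list \<sigma> I then sscale (c \<sigma> K) (Xprod m n k K I) else 0) =
        sscale (c \<sigma> (permute_list \<sigma> I)) (Xprod m n k (permute_list \<sigma> I) I)"
      by (simp add: sum.delta')
  qed
  also have "\<dots> = (\<Sum>\<sigma>\<in>?S. sscale (c \<sigma> (permute_list \<sigma> I) * (-1) ^ xprod_exp m (permute_list \<sigma> I) I)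
      (gen_prod m (zip (permute_list \<sigma> I) I)))"
    using I lI by (intro sum.cong refl) (simp add: Xprod_entry idx_def)
  finally show ?thesis
    by (simp add: c_def power_add ac_simps)
qed

lemma gam_diag_even: "even (gam m I I)"
proof -
  have "even (\<Sum>a<length I. par m (I ! a) * (par m (I ! a) + 1))"
    by (intro dvd_sum) simp
  moreover have "even (\<Sum>b<length I. \<Sum>a<b. par m (I ! b) * (par m (I ! a) + par m (I ! a)))"
    by (intro dvd_sum) simp
  ultimately show ?thesis
    unfolding gam_def by simp
qed

lemma tpar_permute_list_even:
  assumes s: "\<sigma> permutes {..<length I}"
  shows "even (tpar m I (permute_list \<sigma> I))"
proof -
  let ?K = "permute_list \<sigma> I"
  have "(\<Sum>p<length I. par m (?K ! p)) = (\<Sum>p<length I. par m (I ! \<sigma> p))"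
    using s by (intro sum.cong refl) (simp add: permute_list_nth)
  also have "\<dots> = (\<Sum>p<length I. par m (I ! p))"
    by (rule sum.reindex_bij_betw[OF permutes_imp_bij[OF s], where g = "\<lambda>p. par m (I ! p)"])
  finally have "tpar m I ?K + 2 * (\<Sum>p<length I. par m (I ! p)) =
      (\<Sum>p<length I. eP m (I ! p) (?K ! p) + (par m (I ! p) + par m (?K ! p)))"
    by (simp add: tpar_def sum.distrib)
  moreover have "even \<dots>"
    by (intro dvd_sum) (simp add: eP_def)
  ultimately have "even (tpar m I ?K + 2 * (\<Sum>p<length I. par m (I ! p)))"
    by (simp only:)
  then show ?thesis
    by simp
qed

lemma cross_eq_xprod_exp:
  assumes "length K = length I"
  shows "cross m I K I = xprod_exp m K I"
  unfolding cross_def xprod_exp_def sum_distrib_right assms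
proof (intro sum.cong refl)
  show "eP m (I ! p) (K ! p) * eP m (K ! q) (I ! q) = eP m (K ! q) (I ! q) * eP m (K ! p) (I ! p)" for p q
    by (simp add: eP_sym[of m "K ! p"])
qed

(* Of the sign exponents collected in the summand of sigma (see Imm_eq_sum_imm_term) only these
   survive modulo 2: gam I I, the product of the tpar and cross + xprod_exp are even. *)
definition imm_term_exp :: "nat \<Rightarrow> nat list \<Rightarrow> (nat \<Rightarrow> nat) \<Rightarrow> nat" where
  "imm_term_exp m I \<sigma> =
     (\<Sum>p<length I. par m (I ! p)) + Ibar m \<sigma> (permute_list \<sigma> I) + sE m I (permute_list \<sigma> I)"

definition imm_term :: "nat \<Rightarrow> nat list \<Rightarrow> (nat \<Rightarrow> nat) \<Rightarrow> salg" where
  "imm_term m I \<sigma> = sscale ((-1) ^ imm_term_exp m I \<sigma>) (gen_prod m (zip (permute_list \<sigma> I) I))"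

lemma Imm_eq_sum_imm_term:
  assumes I: "set I \<subseteq> {1..m+n}"
  shows "Imm m n \<chi> I = (\<Sum>\<sigma> | \<sigma> permutes {..<length I}. sscale (\<chi> \<sigma>) (imm_term m I \<sigma>))"
proof -
  let ?k = "length I"
  have sign: "(-1) ^ (\<Sum>p<?k. par m (I ! p)) * (-1) ^ gam m I I * (\<chi> \<sigma> *
      (-1) ^ (tpar m I K * tpar m K I + cross m I K I + sE m I K + Ibar m \<sigma> K + xprod_exp m K I))
      = \<chi> \<sigma> * (-1) ^ imm_term_exp m I \<sigma>"
    if s: "\<sigma> permutes {..<?k}" and K: "K = permute_list \<sigma> I" for \<sigma> K
  proof -
    have arith: "even (a + g + (t + c + e + b + x) + (a + b + e))"
      if "even g" "even t" "c = x" for a g t c e b x :: nat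
      using that by presburger
    have "even (tpar m I K * tpar m K I)"
      using tpar_permute_list_even[OF s] K by simp
    moreover have "cross m I K I = xprod_exp m K I"
      using K by (simp add: cross_eq_xprod_exp)
    ultimately have "even ((\<Sum>p<?k. par m (I ! p)) + gam m I I +
      (tpar m I K * tpar m K I + cross m I K I + sE m I K + Ibar m \<sigma> K + xprod_exp m K I)
      + imm_term_exp m I \<sigma>)"
      unfolding imm_term_exp_def K[symmetric] by (intro arith gam_diag_even)
    then have "(-1 :: complex) ^ (\<Sum>p<?k. par m (I ! p)) * (-1) ^ gam m I I *
      (-1) ^ (tpar m I K * tpar m K I + cross m I K I + sE m I K + Ibar m \<sigma> K + xprod_exp m K I)
      = (-1) ^ imm_term_exp m I \<sigma>"
      unfolding power_add[symmetric] by (rule neg_one_power_eq)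
    then show ?thesis
      by (simp add: ac_simps)
  qed
  have "I \<in> idx m n ?k"
    using I by (simp add: idx_def)
  note diag = tmul_chi_tens_Xprod_diag[OF this]
  show ?thesis
    unfolding Imm_def Let_def matel_def diag sscale_sum sscale_sscale imm_term_def
    by (intro sum.cong refl) (simp only: sign mem_Collect_eq)
qed

section \<open>Reordering the index sequence\<close>

lemma Ibar_eq_inversion_sum:
  "Ibar m \<sigma> K = inversion_sum \<sigma> (length K) (\<lambda>p q. par m (K ! p) * par m (K ! q))"
  unfolding Ibar_def inversion_sum_def pair_sum_def by (intro sum.cong refl) auto

lemma sE_eq_pair_sum: "sE m I K = pair_sum (length I) (\<lambda>p q. eP m (I ! q) (K ! q) * par m (K ! p))"
  unfolding sE_def by (rule sum_triangle_eq_pair_sum)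

context
  fixes m :: nat and I :: "nat list" and x \<tau> :: "nat \<Rightarrow> nat"
  assumes x: "x permutes {..<length I}" and \<tau>: "\<tau> permutes {..<length I}"
begin

lemma permute_list_conj:
  "permute_list (inv x \<circ> \<tau> \<circ> x) (permute_list x I) = permute_list x (permute_list \<tau> I)"
proof -
  have "inv x \<circ> \<tau> \<circ> x permutes {..<length I}"
    using x \<tau> by (intro permutes_compose permutes_inv)
  then have "permute_list (inv x \<circ> \<tau> \<circ> x) (permute_list x I) = permute_list (x \<circ> (inv x \<circ> \<tau> \<circ> x)) I"
    by (simp add: permute_list_compose)
  also have "x \<circ> (inv x \<circ> \<tau> \<circ> x) = \<tau> \<circ> x"
    using x by (simp add: fun_eq_iff permutes_inverses(1))
  also have "permute_list (\<tau> \<circ> x) I = permute_list x (permute_list \<tau> I)"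
    using x by (simp add: permute_list_compose)
  finally show ?thesis .
qed

lemma Ibar_conj_parity:
  "even (Ibar m (inv x \<circ> \<tau> \<circ> x) (permute_list x (permute_list \<tau> I)) + Ibar m \<tau> (permute_list \<tau> I)
     + inversion_sum (inv x) (length I)
         (\<lambda>a b. par m (I ! \<tau> a) * par m (I ! \<tau> b) + par m (I ! a) * par m (I ! b)))"
proof -
  let ?n = "length I"
  define u where "u a = par m (I ! a)" for a
  define v where "v a = par m (I ! \<tau> a)" for a
  define F where "F a b = (if inv x (\<tau> b) < inv x (\<tau> a) then v a * v b else 0)" for a b
  define flip where "flip c d = ((inv x d < inv x c) \<noteq> (d < c))" for c d
  define C where "C = pair_sum ?n (\<lambda>a b. if flip (\<tau> a) (\<tau> b) then v a * v b else 0)"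
  have xinv: "inv x (x p) = p" for p
    using x by (simp add: permutes_inverses(2))
  have inv_x_eq: "inv x a = inv x b \<longleftrightarrow> a = b" for a b
    using x by (metis permutes_inverses(1))
  have \<tau>_eq: "\<tau> a = \<tau> b \<longleftrightarrow> a = b" for a b
    using \<tau> by (meson permutes_inj inj_eq)
  have "Ibar m (inv x \<circ> \<tau> \<circ> x) (permute_list x (permute_list \<tau> I)) = pair_sum ?n (\<lambda>p q. F (x p) (x q))"
    unfolding Ibar_eq_inversion_sum inversion_sum_def length_permute_list
    by (rule pair_sum_cong)
      (use x \<tau> in \<open>simp add: F_def v_def xinv permute_list_nth permutes_lessThan_less\<close>)
  moreover have "Ibar m \<tau> (permute_list \<tau> I) = pair_sum ?n (\<lambda>a b. if \<tau> b < \<tau> a then v a * v b else 0)"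
    unfolding Ibar_eq_inversion_sum inversion_sum_def length_permute_list
    by (rule pair_sum_cong) (use \<tau> in \<open>simp add: v_def permute_list_nth\<close>)
  moreover have "inversion_sum (inv x) ?n (\<lambda>a b. F a b + F b a) = inversion_sum (inv x) ?n (\<lambda>a b. v a * v b)"
    unfolding inversion_sum_def
    by (rule pair_sum_cong) (use inv_x_eq \<tau>_eq in \<open>auto simp: F_def mult.commute\<close>)
  moreover have "even (pair_sum ?n F + pair_sum ?n (\<lambda>a b. if \<tau> b < \<tau> a then v a * v b else 0) + C)"
    unfolding C_def pair_sum_add[symmetric] by (rule even_pair_sum) (auto simp: F_def flip_def)
  moreover have "even (C + inversion_sum (inv x) ?n (\<lambda>a b. u a * u b))"
  proof -
    define G where "G c d = (if flip c d then u c * u d else 0)" for c d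
    have "G c d = G d c" for c d
      using inv_x_eq[of c d] by (cases "c = d") (auto simp: G_def flip_def mult.commute)
    then have "even (pair_sum ?n (\<lambda>p q. G (\<tau> p) (\<tau> q)) + pair_sum ?n G)"
      by (rule even_pair_sum_permute_sym[OF \<tau>])
    moreover have "pair_sum ?n (\<lambda>p q. G (\<tau> p) (\<tau> q)) = C"
      unfolding C_def by (rule pair_sum_cong) (simp add: G_def u_def v_def)
    moreover have "pair_sum ?n G = inversion_sum (inv x) ?n (\<lambda>a b. u a * u b)"
      unfolding inversion_sum_def by (rule pair_sum_cong) (simp add: G_def flip_def)
    ultimately show ?thesis
      by simp
  qed
  moreover have "even (P + B + (V + D))"
    if "even (P + R + V)" "even (R + B + C)" "even (C + D)" for P R V B C D :: nat
    using that by presburger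
  ultimately show ?thesis
    using even_pair_sum_permute[OF x, of F]
    by (simp only: inversion_sum_add u_def v_def)
qed

lemma sE_conj_parity:
  "even (sE m (permute_list x I) (permute_list x (permute_list \<tau> I)) + sE m I (permute_list \<tau> I)
     + inversion_sum (inv x) (length I) (\<lambda>a b. eP m (I ! b) (I ! \<tau> b) * par m (I ! \<tau> a)
         + eP m (I ! a) (I ! \<tau> a) * par m (I ! \<tau> b)))"
proof -
  let ?n = "length I"
  define F where "F a b = eP m (I ! b) (I ! \<tau> b) * par m (I ! \<tau> a)" for a b
  have "sE m (permute_list x I) (permute_list x (permute_list \<tau> I)) = pair_sum ?n (\<lambda>p q. F (x p) (x q))"
    unfolding sE_eq_pair_sum length_permute_list
    by (rule pair_sum_cong) (use x \<tau> in \<open>simp add: F_def permute_list_nth permutes_lessThan_less\<close>)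
  moreover have "sE m I (permute_list \<tau> I) = pair_sum ?n F"
    unfolding sE_eq_pair_sum by (rule pair_sum_cong) (use \<tau> in \<open>simp add: F_def permute_list_nth\<close>)
  ultimately show ?thesis
    using even_pair_sum_permute[OF x, of F] by (simp only: F_def)
qed

lemma imm_term_exp_conj_parity:
  "even (imm_term_exp m (permute_list x I) (inv x \<circ> \<tau> \<circ> x) + imm_term_exp m I \<tau>
     + inversion_sum (inv x) (length I) (\<lambda>a b. eP m (I ! a) (I ! \<tau> a) * eP m (I ! b) (I ! \<tau> b)))"
proof -
  let ?n = "length I"
  have "(\<Sum>p<?n. par m (permute_list x I ! p)) = (\<Sum>p<?n. par m (I ! x p))"
    using x by (simp add: permute_list_nth)
  also have "\<dots> = (\<Sum>p<?n. par m (I ! p))"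
    by (rule sum.reindex_bij_betw[OF permutes_imp_bij[OF x], where g = "\<lambda>p. par m (I ! p)"])
  finally have par_sum: "(\<Sum>p<?n. par m (permute_list x I ! p)) = (\<Sum>p<?n. par m (I ! p))" .
  have "even (inversion_sum (inv x) ?n (\<lambda>a b.
      (par m (I ! \<tau> a) * par m (I ! \<tau> b) + par m (I ! a) * par m (I ! b))
      + (eP m (I ! b) (I ! \<tau> b) * par m (I ! \<tau> a) + eP m (I ! a) (I ! \<tau> a) * par m (I ! \<tau> b))
      + eP m (I ! a) (I ! \<tau> a) * eP m (I ! b) (I ! \<tau> b)))"
    unfolding inversion_sum_def by (rule even_pair_sum) (auto simp: eP_def par_def)
  note pointwise = this[unfolded inversion_sum_add]
  have arith: "even (P + Q + W) \<Longrightarrow> even (R + S + X) \<Longrightarrow> even (W + X + E) \<Longrightarrow>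
      even (U + P + R + (U + Q + S) + E)" for P Q W R S X E U :: nat
    by presburger
  show ?thesis
    unfolding imm_term_exp_def permute_list_conj length_permute_list par_sum
    by (rule arith[OF Ibar_conj_parity[unfolded inversion_sum_add]
          sE_conj_parity[unfolded inversion_sum_add] pointwise])
qed

(* Both sides carry the same generators, listed in orders differing by x; the sign of the
   reordering (gen_prod_permute_list) is exactly the change of imm_term_exp. *)
lemma imm_term_conj: "imm_term m (permute_list x I) (inv x \<circ> \<tau> \<circ> x) = imm_term m I \<tau>"
proof -
  let ?n = "length I" and ?gs = "zip (permute_list \<tau> I) I"
  let ?S = "inversion_sum (inv x) ?n (\<lambda>a b. eP m (I ! a) (I ! \<tau> a) * eP m (I ! b) (I ! \<tau> b))"
  have eP_01: "eP m i j = 0 \<or> eP m i j = 1" for i j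
    by (simp add: eP_def par_def)
  have odd_gs: "oddgen m (?gs ! a) \<longleftrightarrow> eP m (I ! a) (I ! \<tau> a) = 1" if "a < ?n" for a
    using that \<tau> eP_sym[of m "I ! a"] by (simp add: oddgen_def permute_list_nth)
  have "inversion_sum (inv x) ?n (\<lambda>a b. if oddgen m (?gs ! a) \<and> oddgen m (?gs ! b) then 1 else 0) = ?S"
    unfolding inversion_sum_def
  proof (rule pair_sum_cong)
    fix a b assume "a < b" "b < ?n"
    then show "(if inv x b < inv x a then if oddgen m (?gs ! a) \<and> oddgen m (?gs ! b) then 1 else 0 else 0) =
        (if inv x b < inv x a then eP m (I ! a) (I ! \<tau> a) * eP m (I ! b) (I ! \<tau> b) else 0)"
      using odd_gs[of a] odd_gs[of b] eP_01[of "I ! a" "I ! \<tau> a"] eP_01[of "I ! b" "I ! \<tau> b"]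
      by auto
  qed
  moreover have "gen_prod m (permute_list x ?gs) =
      sscale ((-1) ^ inversion_sum (inv x) ?n
        (\<lambda>a b. if oddgen m (?gs ! a) \<and> oddgen m (?gs ! b) then 1 else 0)) (gen_prod m ?gs)"
    using gen_prod_permute_list[of x ?gs m] x by simp
  moreover have "zip (permute_list x (permute_list \<tau> I)) (permute_list x I) = permute_list x ?gs"
    using x by (simp add: permute_list_zip)
  ultimately have "imm_term m (permute_list x I) (inv x \<circ> \<tau> \<circ> x) =
      sscale ((-1) ^ imm_term_exp m (permute_list x I) (inv x \<circ> \<tau> \<circ> x) * (-1) ^ ?S) (gen_prod m ?gs)"
    unfolding imm_term_def permute_list_conj by simp
  also have "(-1 :: complex) ^ imm_term_exp m (permute_list x I) (inv x \<circ> \<tau> \<circ> x) * (-1) ^ ?S =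
      (-1) ^ imm_term_exp m I \<tau>"
    unfolding power_add[symmetric]
    by (rule neg_one_power_eq) (use imm_term_exp_conj_parity in \<open>simp only: ac_simps\<close>)
  finally show ?thesis
    unfolding imm_term_def .
qed

end

section \<open>Young subgroups\<close>

definition perm_dsum :: "nat \<Rightarrow> (nat \<Rightarrow> nat) \<Rightarrow> (nat \<Rightarrow> nat) \<Rightarrow> nat \<Rightarrow> nat" where
  "perm_dsum a h1 h2 p = (if p < a then h1 p else a + h2 (p - a))"

lemma sum_lessThan_add:
  fixes a b :: nat
  shows "(\<Sum>p<a + b. f p) = (\<Sum>p<a. f p) + (\<Sum>q<b. f (a + q))"
  by (induction b) (simp_all add: add.assoc)

lemma perm_dsum_id_eq_map_permutation:
  assumes h2: "h2 permutes {..<b}"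
  shows "perm_dsum a id h2 = map_permutation {..<b} ((+) a) h2"
proof
  fix p
  show "perm_dsum a id h2 p = map_permutation {..<b} ((+) a) h2 p"
  proof (cases "p < a")
    case True
    then show ?thesis
      by (auto simp: perm_dsum_def map_permutation_def restrict_id_def)
  next
    case False
    then obtain q where p: "p = a + q"
      by (metis le_add_diff_inverse not_less)
    then show ?thesis
      using permutes_not_in[OF h2, of q]
      by (cases "q < b") (auto simp: perm_dsum_def map_permutation_def restrict_id_def inv_into_f_f)
  qed
qed

lemma perm_dsum_eq_comp: "h1 permutes {..<a} \<Longrightarrow> perm_dsum a h1 h2 = h1 \<circ> perm_dsum a id h2"
  by (auto simp: fun_eq_iff perm_dsum_def permutes_not_in)

lemma perm_dsum_permutes:
  assumes h1: "h1 permutes {..<a}" and h2: "h2 permutes {..<b}"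
  shows "perm_dsum a h1 h2 permutes {..<a + b}"
proof -
  have "bij_betw ((+) a) {..<b} {a..<a + b}"
    by (simp add: bij_betw_def lessThan_atLeast0 add.commute)
  then have "perm_dsum a id h2 permutes {a..<a + b}"
    unfolding perm_dsum_id_eq_map_permutation[OF h2] using h2 by (rule map_permutation_permutes)
  then have "perm_dsum a id h2 permutes {..<a + b}"
    by (rule permutes_subset) auto
  moreover have "h1 permutes {..<a + b}"
    using h1 by (rule permutes_subset) auto
  ultimately show ?thesis
    unfolding perm_dsum_eq_comp[OF h1] by (rule permutes_compose)
qed

lemma sign_perm_dsum:
  assumes h1: "h1 permutes {..<a}" and h2: "h2 permutes {..<b}"
  shows "sign (perm_dsum a h1 h2) = sign h1 * sign h2"
proof -
  have "sign (perm_dsum a id h2) = sign h2"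
    using h2 by (simp add: perm_dsum_id_eq_map_permutation sign_map_permutation)
  moreover have "permutation h1" and "permutation (perm_dsum a id h2)"
    using h1 perm_dsum_permutes[OF permutes_id h2] by (auto simp: permutation_permutes)
  ultimately show ?thesis
    by (simp add: perm_dsum_eq_comp[OF h1] sign_compose)
qed

lemma permute_list_perm_dsum:
  assumes "length J1 = a" "length J2 = b" "h1 permutes {..<a}" "h2 permutes {..<b}"
  shows "permute_list (perm_dsum a h1 h2) (J1 @ J2) = permute_list h1 J1 @ permute_list h2 J2"
proof (rule nth_equalityI)
  have h: "perm_dsum a h1 h2 permutes {..<length (J1 @ J2)}"
    using perm_dsum_permutes[OF assms(3,4)] assms(1,2) by simp
  fix i assume "i < length (permute_list (perm_dsum a h1 h2) (J1 @ J2))"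
  then have i: "i < length (J1 @ J2)"
    by simp
  show "permute_list (perm_dsum a h1 h2) (J1 @ J2) ! i = (permute_list h1 J1 @ permute_list h2 J2) ! i"
  proof (cases "i < a")
    case True
    then show ?thesis
      using assms h i permutes_lessThan_less[OF assms(3) True]
      by (simp add: permute_list_nth nth_append perm_dsum_def)
  next
    case False
    then have "i - a < b"
      using i assms(1,2) by simp
    then show ?thesis
      using assms h i False permutes_lessThan_less[OF assms(4)]
      by (simp add: permute_list_nth nth_append perm_dsum_def)
  qed
qed simp

lemma Ibar_perm_dsum:
  assumes lK1: "length K1 = a" and lK2: "length K2 = b"
    and h1: "h1 permutes {..<a}" and h2: "h2 permutes {..<b}"
  shows "Ibar m (perm_dsum a h1 h2) (K1 @ K2) = Ibar m h1 K1 + Ibar m h2 K2"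
proof -
  let ?h = "perm_dsum a h1 h2"
  define G where "G p q = (if p < q \<and> ?h q < ?h p then par m ((K1 @ K2) ! p) * par m ((K1 @ K2) ! q) else 0)"
    for p q
  have "Ibar m ?h (K1 @ K2) = (\<Sum>p<a + b. \<Sum>q<a + b. G p q)"
    by (simp add: Ibar_def G_def lK1 lK2)
  also have "\<dots> = (\<Sum>p<a. \<Sum>q<a. G p q) + (\<Sum>p<a. \<Sum>q<b. G p (a + q))
      + ((\<Sum>p<b. \<Sum>q<a. G (a + p) q) + (\<Sum>p<b. \<Sum>q<b. G (a + p) (a + q)))"
    by (simp add: sum_lessThan_add sum.distrib)
  also have "(\<Sum>p<a. \<Sum>q<b. G p (a + q)) = 0"
  proof (intro sum.neutral ballI)
    fix p q assume p: "p \<in> {..<a}"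
    then have "h1 p < a"
      using permutes_lessThan_less[OF h1] by simp
    then show "G p (a + q) = 0"
      using p by (simp add: G_def perm_dsum_def)
  qed
  also have "(\<Sum>p<b. \<Sum>q<a. G (a + p) q) = 0"
    by (intro sum.neutral ballI) (auto simp: G_def)
  also have "(\<Sum>p<a. \<Sum>q<a. G p q) = Ibar m h1 K1"
    unfolding Ibar_def lK1 by (intro sum.cong refl) (auto simp: G_def perm_dsum_def nth_append lK1)
  also have "(\<Sum>p<b. \<Sum>q<b. G (a + p) (a + q)) = Ibar m h2 K2"
    unfolding Ibar_def lK2 by (intro sum.cong refl) (auto simp: G_def perm_dsum_def nth_append lK1)
  finally show ?thesis
    by simp
qed

lemma sE_append:
  assumes lK1: "length K1 = length J1" and lK2: "length K2 = length J2"
  shows "sE m (J1 @ J2) (K1 @ K2) =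
    sE m J1 K1 + sE m J2 K2 + tpar m J2 K2 * (\<Sum>p<length K1. par m (K1 ! p))"
proof -
  let ?a = "length J1" and ?b = "length J2"
  let ?f = "\<lambda>q p. eP m ((J1 @ J2) ! q) ((K1 @ K2) ! q) * par m ((K1 @ K2) ! p)"
  have "sE m (J1 @ J2) (K1 @ K2) = (\<Sum>q<?a + ?b. \<Sum>p<q. ?f q p)"
    by (simp add: sE_def)
  also have "\<dots> = (\<Sum>q<?a. \<Sum>p<q. ?f q p) + (\<Sum>q<?b. \<Sum>p<?a + q. ?f (?a + q) p)"
    by (rule sum_lessThan_add)
  also have "(\<Sum>q<?a. \<Sum>p<q. ?f q p) = sE m J1 K1"
    unfolding sE_def by (intro sum.cong refl) (auto simp: nth_append lK1)
  also have "(\<Sum>q<?b. \<Sum>p<?a + q. ?f (?a + q) p) =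
      (\<Sum>q<?b. eP m (J2 ! q) (K2 ! q) * (\<Sum>p<?a. par m (K1 ! p)) + (\<Sum>p<q. eP m (J2 ! q) (K2 ! q) * par m (K2 ! p)))"
    by (intro sum.cong refl) (simp add: sum_lessThan_add nth_append lK1 sum_distrib_left)
  also have "\<dots> = tpar m J2 K2 * (\<Sum>p<length K1. par m (K1 ! p)) + sE m J2 K2"
    by (simp add: sum.distrib tpar_def sE_def lK1 sum_distrib_right)
  finally show ?thesis
    by simp
qed

lemma imm_term_perm_dsum:
  assumes "length J1 = a" "length J2 = b" "h1 permutes {..<a}" "h2 permutes {..<b}"
  shows "imm_term m (J1 @ J2) (perm_dsum a h1 h2) = sprod m (imm_term m J1 h1) (imm_term m J2 h2)"
proof -
  let ?K1 = "permute_list h1 J1" and ?K2 = "permute_list h2 J2"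
  have K: "permute_list (perm_dsum a h1 h2) (J1 @ J2) = ?K1 @ ?K2"
    by (rule permute_list_perm_dsum[OF assms])
  have "imm_term_exp m (J1 @ J2) (perm_dsum a h1 h2) =
      imm_term_exp m J1 h1 + imm_term_exp m J2 h2 + tpar m J2 ?K2 * (\<Sum>p<a. par m (?K1 ! p))"
    unfolding imm_term_exp_def K using assms
    by (simp add: Ibar_perm_dsum sE_append sum_lessThan_add nth_append)
  moreover have "even (tpar m J2 ?K2)"
    using tpar_permute_list_even assms by simp
  moreover have "even (x + y + t * s + (x + y))" if "even t" for x y t s :: nat
    using that by simp
  ultimately have "(-1::complex) ^ imm_term_exp m (J1 @ J2) (perm_dsum a h1 h2) =
      (-1) ^ imm_term_exp m J1 h1 * (-1) ^ imm_term_exp m J2 h2"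
    unfolding power_add[symmetric] by (intro neg_one_power_eq) simp
  moreover have "zip (?K1 @ ?K2) (J1 @ J2) = zip ?K1 J1 @ zip ?K2 J2"
    using assms by simp
  ultimately show ?thesis
    unfolding imm_term_def K by (simp add: gen_prod_append sprod_sscale_left sprod_sscale_right mult.commute)
qed

lemma blk_Cons: "blk (a # mu) p = (if p < a then 0 else Suc (blk mu (p - a)))"
proof -
  let ?J = "{j. j < length mu \<and> sum_list (take (Suc j) mu) \<le> p - a}"
  have "{j. j < length (a # mu) \<and> sum_list (take (Suc j) (a # mu)) \<le> p} =
      (if p < a then {} else insert 0 (Suc ` ?J))"
    by (auto simp: image_iff less_Suc_eq_0_disj)
  moreover have "finite ?J"
    by simp
  ultimately show ?thesis
    unfolding blk_def by (simp add: card_image)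
qed

lemma young_Nil: "young [] = {id}"
  by (auto simp: young_def)

lemma perm_dsum_in_young:
  assumes h1: "h1 permutes {..<a}" and h2: "h2 \<in> young mu"
  shows "perm_dsum a h1 h2 \<in> young (a # mu)"
proof -
  have "perm_dsum a h1 h2 permutes {..<sum_list (a # mu)}"
    using perm_dsum_permutes[OF h1, of h2 "sum_list mu"] h2 by (simp add: young_def)
  moreover have "blk (a # mu) (perm_dsum a h1 h2 p) = blk (a # mu) p" if "p < sum_list (a # mu)" for p
  proof (cases "p < a")
    case True
    then show ?thesis
      using permutes_lessThan_less[OF h1 True] by (simp add: perm_dsum_def blk_Cons)
  next
    case False
    then have "blk mu (h2 (p - a)) = blk mu (p - a)"
      using that h2 by (simp add: young_def)
    then show ?thesis
      using False by (simp add: perm_dsum_def blk_Cons)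
  qed
  ultimately show ?thesis
    by (simp add: young_def)
qed

lemma young_Cons_decompose:
  assumes \<sigma>: "\<sigma> \<in> young (a # mu)"
  obtains h1 h2 where "h1 permutes {..<a}" "h2 \<in> young mu" "\<sigma> = perm_dsum a h1 h2"
proof -
  define b where "b = sum_list mu"
  have sp: "\<sigma> permutes {..<a + b}"
    using \<sigma> by (simp add: young_def b_def)
  have blk_eq: "blk (a # mu) (\<sigma> p) = blk (a # mu) p" if "p < a + b" for p
    using \<sigma> that by (simp add: young_def b_def)
  have lt_iff: "\<sigma> p < a \<longleftrightarrow> p < a" if "p < a + b" for p
    using blk_eq[OF that] by (auto simp: blk_Cons split: if_splits)
  have lt: "\<sigma> p < a + b" if "p < a + b" for p
    using permutes_lessThan_less[OF sp that] .
  have \<sigma>_eq: "\<sigma> p = \<sigma> q \<longleftrightarrow> p = q" for p q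
    using permutes_inj[OF sp] by (simp add: inj_eq)
  define h1 where "h1 p = (if p < a then \<sigma> p else p)" for p
  define h2 where "h2 q = (if q < b then \<sigma> (a + q) - a else q)" for q
  have h1: "h1 permutes {..<a}"
    by (rule inj_imp_permutes) (auto simp: inj_on_def h1_def \<sigma>_eq lt_iff)
  have ge: "a \<le> \<sigma> (a + q)" if "q < b" for q
    using lt_iff[of "a + q"] that by simp
  have h2: "h2 permutes {..<b}"
  proof (rule inj_imp_permutes)
    show "inj_on h2 {..<b}"
    proof (rule inj_onI)
      fix p q assume "p \<in> {..<b}" "q \<in> {..<b}" "h2 p = h2 q"
      then have "\<sigma> (a + p) = \<sigma> (a + q)"
        using ge[of p] ge[of q] by (simp add: h2_def)
      then show "p = q"
        by (simp add: \<sigma>_eq)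
    qed
    show "h2 q \<in> {..<b}" if "q \<in> {..<b}" for q
      using that lt[of "a + q"] ge[of q] by (simp add: h2_def)
  qed (auto simp: h2_def)
  have "blk mu (h2 q) = blk mu q" if "q < b" for q
    using blk_eq[of "a + q"] ge[OF that] that by (simp add: blk_Cons h2_def)
  then have "h2 \<in> young mu"
    using h2 by (simp add: young_def b_def)
  moreover have "\<sigma> = perm_dsum a h1 h2"
  proof
    fix p
    show "\<sigma> p = perm_dsum a h1 h2 p"
    proof (cases "p < a + b")
      case True
      then show ?thesis
        using ge[of "p - a"] by (auto simp: perm_dsum_def h1_def h2_def)
    next
      case False
      then show ?thesis
        using permutes_not_in[OF sp] by (simp add: perm_dsum_def h2_def)
    qed
  qed
  ultimately show ?thesis
    using h1 that by blast
qed

lemma young_Cons: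
  "young (a # mu) = (\<lambda>(h1, h2). perm_dsum a h1 h2) ` ({h1. h1 permutes {..<a}} \<times> young mu)"
proof (intro equalityI subsetI)
  fix \<sigma> assume "\<sigma> \<in> young (a # mu)"
  then obtain h1 h2 where "h1 permutes {..<a}" "h2 \<in> young mu" "\<sigma> = perm_dsum a h1 h2"
    by (rule young_Cons_decompose)
  then show "\<sigma> \<in> (\<lambda>(h1, h2). perm_dsum a h1 h2) ` ({h1. h1 permutes {..<a}} \<times> young mu)"
    by auto
qed (auto intro: perm_dsum_in_young)

lemma inj_on_perm_dsum:
  "inj_on (\<lambda>(h1, h2). perm_dsum a h1 h2) ({h1. h1 permutes {..<a}} \<times> young mu)"
proof (rule inj_onI, clarsimp)
  fix h1 h2 h1' h2'
  assume h: "h1 permutes {..<a}" "h1' permutes {..<a}" and eq: "perm_dsum a h1 h2 = perm_dsum a h1' h2'"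
  have "h1 p = h1' p" for p
    using fun_cong[OF eq, of p] permutes_not_in[OF h(1), of p] permutes_not_in[OF h(2), of p]
    by (cases "p < a") (auto simp: perm_dsum_def)
  moreover have "h2 q = h2' q" for q
    using fun_cong[OF eq, of "a + q"] by (simp add: perm_dsum_def)
  ultimately show "h1 = h1' \<and> h2 = h2'"
    by auto
qed

lemma card_young: "card (young lam) = (\<Prod>a\<leftarrow>lam. fact a)"
proof (induction lam)
  case Nil
  then show ?case
    by (simp add: young_Nil)
next
  case (Cons a mu)
  have "card (young (a # mu)) = card ({h1. h1 permutes {..<a}} \<times> young mu)"
    unfolding young_Cons by (rule card_image[OF inj_on_perm_dsum])
  also have "\<dots> = fact a * card (young mu)"
    by (simp add: card_cartesian_product card_permutations)
  finally show ?case
    using Cons by simp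
qed

fun blocks :: "nat list \<Rightarrow> 'a list \<Rightarrow> 'a list list" where
  "blocks [] J = []"
| "blocks (a # mu) J = take a J # blocks mu (drop a J)"

lemma set_blocks_subset: "B \<in> set (blocks lam J) \<Longrightarrow> set B \<subseteq> set J"
  by (induction lam J rule: blocks.induct) (auto dest: in_set_takeD in_set_dropD)

lemma imm_term_Nil [simp]: "imm_term m [] h = sone"
  by (simp add: imm_term_def imm_term_exp_def Ibar_def sE_def)

lemma sum_young_imm_term:
  assumes \<theta>_id: "\<theta> id = 1"
    and \<theta>_mult: "\<And>a b h1 h2. h1 permutes {..<a} \<Longrightarrow> h2 permutes {..<b} \<Longrightarrow>
      \<theta> (perm_dsum a h1 h2) = \<theta> h1 * \<theta> h2"
  shows "set J \<subseteq> {1..m+n} \<Longrightarrow> length J = sum_list lam \<Longrightarrow>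
    (\<Sum>h\<in>young lam. sscale (\<theta> h) (imm_term m J h)) = sprod_list m (map (Imm m n \<theta>) (blocks lam J))"
proof (induction lam arbitrary: J)
  case Nil
  then show ?case
    using \<theta>_id by (simp add: young_Nil sprod_list_def id_def)
next
  case (Cons a mu)
  let ?J1 = "take a J" and ?J2 = "drop a J" and ?P = "{h1. h1 permutes {..<a}}"
  have l1: "length ?J1 = a" and l2: "length ?J2 = sum_list mu"
    using Cons.prems by simp_all
  have s1: "set ?J1 \<subseteq> {1..m+n}" and s2: "set ?J2 \<subseteq> {1..m+n}"
    using Cons.prems set_take_subset[of a J] set_drop_subset[of a J] by auto
  have "(\<Sum>h\<in>young (a # mu). sscale (\<theta> h) (imm_term m J h))
      = (\<Sum>(h1, h2)\<in>?P \<times> young mu. sscale (\<theta> (perm_dsum a h1 h2)) (imm_term m J (perm_dsum a h1 h2)))"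
    unfolding young_Cons by (subst sum.reindex[OF inj_on_perm_dsum]) (simp add: comp_def case_prod_unfold)
  also have "\<dots> = (\<Sum>h1\<in>?P. \<Sum>h2\<in>young mu.
      sprod m (sscale (\<theta> h1) (imm_term m ?J1 h1)) (sscale (\<theta> h2) (imm_term m ?J2 h2)))"
    unfolding sum.cartesian_product[symmetric]
  proof (intro sum.cong refl)
    fix h1 h2 assume "h1 \<in> ?P" and "h2 \<in> young mu"
    then have h1: "h1 permutes {..<a}" and h2: "h2 permutes {..<sum_list mu}"
      by (simp_all add: young_def)
    show "sscale (\<theta> (perm_dsum a h1 h2)) (imm_term m J (perm_dsum a h1 h2)) =
        sprod m (sscale (\<theta> h1) (imm_term m ?J1 h1)) (sscale (\<theta> h2) (imm_term m ?J2 h2))"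
      using imm_term_perm_dsum[OF l1 l2 h1 h2] \<theta>_mult[OF h1 h2]
      by (simp add: sprod_sscale_left sprod_sscale_right ac_simps)
  qed
  also have "\<dots> = sprod m (\<Sum>h1\<in>?P. sscale (\<theta> h1) (imm_term m ?J1 h1))
      (\<Sum>h2\<in>young mu. sscale (\<theta> h2) (imm_term m ?J2 h2))"
    by (simp add: sprod_sum_left sprod_sum_right) (rule sum.swap)
  also have "(\<Sum>h1\<in>?P. sscale (\<theta> h1) (imm_term m ?J1 h1)) = Imm m n \<theta> ?J1"
    unfolding Imm_eq_sum_imm_term[OF s1] l1 ..
  also have "(\<Sum>h2\<in>young mu. sscale (\<theta> h2) (imm_term m ?J2 h2)) =
      sprod_list m (map (Imm m n \<theta>) (blocks mu ?J2))"
    by (rule Cons.IH[OF s2 l2])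
  finally show ?case
    by (simp add: sprod_list_def)
qed

section \<open>Immanants of induced characters\<close>

definition class_function :: "((nat \<Rightarrow> nat) \<Rightarrow> complex) \<Rightarrow> bool" where
  "class_function \<theta> \<longleftrightarrow>
     (\<forall>k x \<tau>. x permutes {..<k} \<longrightarrow> \<tau> permutes {..<k} \<longrightarrow> \<theta> (inv x \<circ> \<tau> \<circ> x) = \<theta> \<tau>)"

lemma class_function_chi_col: "class_function chi_col"
  unfolding class_function_def chi_col_def
proof (intro allI impI)
  fix k :: nat and x \<tau> assume x: "x permutes {..<k}" and \<tau>: "\<tau> permutes {..<k}"
  have "permutation x" "permutation \<tau>" "permutation (inv x)"
    using x \<tau> permutes_inv[OF x] by (auto simp: permutation_permutes)
  then have "sign (inv x \<circ> \<tau> \<circ> x) = sign \<tau> * (sign x * sign x)"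
    by (simp add: sign_compose permutation_compose sign_inverse)
  then show "of_int (sign (inv x \<circ> \<tau> \<circ> x)) = (of_int (sign \<tau>) :: complex)"
    by simp
qed

lemma class_function_chi_row: "class_function chi_row"
  by (simp add: class_function_def chi_row_def)

lemma sum_permutes_conj:
  assumes x: "x permutes {..<k}"
  shows "(\<Sum>\<sigma> | \<sigma> permutes {..<k}. g \<sigma>) = (\<Sum>\<tau> | \<tau> permutes {..<k}. g (inv x \<circ> \<tau> \<circ> x))"
proof (rule sum.reindex_bij_betw[symmetric])
  show "bij_betw (\<lambda>\<tau>. inv x \<circ> \<tau> \<circ> x) {\<tau>. \<tau> permutes {..<k}} {\<sigma>. \<sigma> permutes {..<k}}"
  proof (rule bij_betw_byWitness[where f' = "\<lambda>\<sigma>. x \<circ> \<sigma> \<circ> inv x"])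
    show "\<forall>\<tau>\<in>{\<tau>. \<tau> permutes {..<k}}. x \<circ> (inv x \<circ> \<tau> \<circ> x) \<circ> inv x = \<tau>"
      and "\<forall>\<sigma>\<in>{\<sigma>. \<sigma> permutes {..<k}}. inv x \<circ> (x \<circ> \<sigma> \<circ> inv x) \<circ> x = \<sigma>"
      using x by (auto simp: fun_eq_iff permutes_inverses)
    show "(\<lambda>\<tau>. inv x \<circ> \<tau> \<circ> x) ` {\<tau>. \<tau> permutes {..<k}} \<subseteq> {\<sigma>. \<sigma> permutes {..<k}}"
      and "(\<lambda>\<sigma>. x \<circ> \<sigma> \<circ> inv x) ` {\<sigma>. \<sigma> permutes {..<k}} \<subseteq> {\<tau>. \<tau> permutes {..<k}}"
      using x permutes_inv[OF x] by (auto intro!: permutes_compose)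
  qed
qed

lemma Imm_permute_list:
  assumes \<theta>: "class_function \<theta>" and J: "set J \<subseteq> {1..m+n}" and x: "x permutes {..<length J}"
  shows "Imm m n \<theta> (permute_list x J) = Imm m n \<theta> J"
proof -
  have "Imm m n \<theta> (permute_list x J) =
      (\<Sum>\<sigma> | \<sigma> permutes {..<length J}. sscale (\<theta> \<sigma>) (imm_term m (permute_list x J) \<sigma>))"
    using J x by (simp add: Imm_eq_sum_imm_term)
  also have "\<dots> = (\<Sum>\<tau> | \<tau> permutes {..<length J}.
      sscale (\<theta> (inv x \<circ> \<tau> \<circ> x)) (imm_term m (permute_list x J) (inv x \<circ> \<tau> \<circ> x)))"
    by (rule sum_permutes_conj[OF x])
  also have "\<dots> = (\<Sum>\<tau> | \<tau> permutes {..<length J}. sscale (\<theta> \<tau>) (imm_term m J \<tau>))"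
    using \<theta> x by (intro sum.cong refl) (simp add: class_function_def imm_term_conj)
  also have "\<dots> = Imm m n \<theta> J"
    using J by (simp add: Imm_eq_sum_imm_term)
  finally show ?thesis .
qed

lemma Imm_sort:
  assumes "class_function \<theta>" and "set J \<subseteq> {1..m+n}"
  shows "Imm m n \<theta> (sort J) = Imm m n \<theta> J"
proof -
  obtain x where "x permutes {..<length J}" "permute_list x J = sort J"
    by (rule mset_eq_permutation[of "sort J" J]) simp
  then show ?thesis
    using Imm_permute_list[OF assms] by metis
qed

lemma sum_imm_term_conj_in:
  assumes x: "x permutes {..<length I}" and H: "H \<subseteq> {\<sigma>. \<sigma> permutes {..<length I}}"
  shows "(\<Sum>\<sigma> | \<sigma> permutes {..<length I}.
      if inv x \<circ> \<sigma> \<circ> x \<in> H then sscale (\<theta> (inv x \<circ> \<sigma> \<circ> x)) (imm_term m I \<sigma>) else 0)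
    = (\<Sum>h\<in>H. sscale (\<theta> h) (imm_term m (permute_list x I) h))"
proof -
  let ?P = "{\<sigma>. \<sigma> permutes {..<length I}}"
  have x': "inv x permutes {..<length I}"
    using x by (rule permutes_inv)
  have cancel: "inv x \<circ> (x \<circ> h \<circ> inv x) \<circ> x = h" for h
    using x by (simp add: fun_eq_iff permutes_inverses)
  have "(\<Sum>\<sigma>\<in>?P. if inv x \<circ> \<sigma> \<circ> x \<in> H then sscale (\<theta> (inv x \<circ> \<sigma> \<circ> x)) (imm_term m I \<sigma>) else 0)
    = (\<Sum>h\<in>?P. if inv x \<circ> (x \<circ> h \<circ> inv x) \<circ> x \<in> H
        then sscale (\<theta> (inv x \<circ> (x \<circ> h \<circ> inv x) \<circ> x)) (imm_term m I (x \<circ> h \<circ> inv x)) else 0)"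
    using sum_permutes_conj[OF x'] x by (simp add: permutes_inv_inv)
  also have "\<dots> = (\<Sum>h\<in>?P. if h \<in> H then sscale (\<theta> h) (imm_term m I (x \<circ> h \<circ> inv x)) else 0)"
    by (simp only: cancel)
  also have "\<dots> = (\<Sum>h\<in>?P. if h \<in> H then sscale (\<theta> h) (imm_term m (permute_list x I) h) else 0)"
  proof (intro sum.cong refl if_cong)
    fix h assume "h \<in> ?P"
    then have "x \<circ> h \<circ> inv x permutes {..<length I}"
      using x x' by (auto intro!: permutes_compose)
    then have "imm_term m (permute_list x I) (inv x \<circ> (x \<circ> h \<circ> inv x) \<circ> x) = imm_term m I (x \<circ> h \<circ> inv x)"
      by (rule imm_term_conj[OF x])
    then show "sscale (\<theta> h) (imm_term m I (x \<circ> h \<circ> inv x)) = sscale (\<theta> h) (imm_term m (permute_list x I) h)"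
      by (simp add: cancel)
  qed
  also have "\<dots> = (\<Sum>h\<in>H. sscale (\<theta> h) (imm_term m (permute_list x I) h))"
    using H by (simp add: sum.If_cases Int_absorb1 finite_permutations)
  finally show ?thesis .
qed

lemma Imm_ind_char_young:
  assumes \<theta>: "class_function \<theta>" and \<theta>_id: "\<theta> id = 1"
    and \<theta>_mult: "\<And>a b h1 h2. h1 permutes {..<a} \<Longrightarrow> h2 permutes {..<b} \<Longrightarrow>
      \<theta> (perm_dsum a h1 h2) = \<theta> h1 * \<theta> h2"
    and I: "set I \<subseteq> {1..m+n}" and lI: "length I = sum_list lam"
  shows "Imm m n (ind_char (sum_list lam) (young lam) \<theta>) I =
    sscale (1 / of_nat (card (young lam))) (\<Sum>x | x permutes {..<length I}.
      sprod_list m (map (Imm m n \<theta>) (map sort (blocks lam (permute_list x I)))))"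
proof -
  let ?P = "{\<sigma>. \<sigma> permutes {..<length I}}" and ?H = "young lam"
  let ?c = "1 / of_nat (card ?H) :: complex"
  have H: "?H \<subseteq> ?P"
    using lI by (auto simp: young_def)
  have "Imm m n (ind_char (sum_list lam) ?H \<theta>) I = (\<Sum>\<sigma>\<in>?P. sscale (?c *
      (\<Sum>x\<in>?P. if inv x \<circ> \<sigma> \<circ> x \<in> ?H then \<theta> (inv x \<circ> \<sigma> \<circ> x) else 0)) (imm_term m I \<sigma>))"
    unfolding Imm_eq_sum_imm_term[OF I] ind_char_def lI[symmetric]
    by (simp add: sum.inter_filter[symmetric] finite_permutations Collect_conj_eq)
  also have "\<dots> = sscale ?c (\<Sum>\<sigma>\<in>?P. \<Sum>x\<in>?P.
      if inv x \<circ> \<sigma> \<circ> x \<in> ?H then sscale (\<theta> (inv x \<circ> \<sigma> \<circ> x)) (imm_term m I \<sigma>) else 0)"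
    by (simp only: sscale_sscale[symmetric] sscale_sum_left sscale_sum if_distrib[of "\<lambda>c. sscale c _"]
        sscale_zero_left)
  also have "\<dots> = sscale ?c (\<Sum>x\<in>?P. \<Sum>\<sigma>\<in>?P.
      if inv x \<circ> \<sigma> \<circ> x \<in> ?H then sscale (\<theta> (inv x \<circ> \<sigma> \<circ> x)) (imm_term m I \<sigma>) else 0)"
    by (subst sum.swap) (rule refl)
  also have "\<dots> = sscale ?c (\<Sum>x\<in>?P. \<Sum>h\<in>?H. sscale (\<theta> h) (imm_term m (permute_list x I) h))"
    using H by (simp add: sum_imm_term_conj_in)
  also have "\<dots> = sscale ?c (\<Sum>x\<in>?P.
      sprod_list m (map (Imm m n \<theta>) (map sort (blocks lam (permute_list x I)))))"
  proof (intro arg_cong[of _ _ "sscale ?c"] sum.cong refl)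
    fix x assume "x \<in> ?P"
    then have x: "x permutes {..<length I}" and xI: "set (permute_list x I) = set I"
      by simp_all
    have "map (Imm m n \<theta>) (map sort (blocks lam (permute_list x I))) =
        map (Imm m n \<theta>) (blocks lam (permute_list x I))"
      unfolding map_map
      by (rule map_cong[OF refl]) (use I xI in \<open>auto simp: Imm_sort[OF \<theta>] dest!: set_blocks_subset\<close>)
    moreover have "(\<Sum>h\<in>?H. sscale (\<theta> h) (imm_term m (permute_list x I) h)) =
        sprod_list m (map (Imm m n \<theta>) (blocks lam (permute_list x I)))"
      using I xI lI by (intro sum_young_imm_term[OF \<theta>_id \<theta>_mult]) auto
    ultimately show "(\<Sum>h\<in>?H. sscale (\<theta> h) (imm_term m (permute_list x I) h)) =
        sprod_list m (map (Imm m n \<theta>) (map sort (blocks lam (permute_list x I))))"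
      by (simp only:)
  qed
  finally show ?thesis .
qed

section \<open>Counting rearrangements\<close>

lemma card_permutations_of_multiset_alpha:
  "card (permutations_of_multiset (mset I)) * alpha I = fact (length I)"
  using card_permutations_of_multiset_aux[of "mset I"] by (simp add: alpha_def count_mset)

lemma permute_list_image_permutes:
  "(\<lambda>x. permute_list x I) ` {x. x permutes {..<length I}} = permutations_of_multiset (mset I)"
proof (intro equalityI subsetI)
  fix J assume "J \<in> permutations_of_multiset (mset I)"
  then obtain x where "x permutes {..<length I}" "permute_list x I = J"
    by (metis mset_eq_permutation permutations_of_multisetD)
  then show "J \<in> (\<lambda>x. permute_list x I) ` {x. x permutes {..<length I}}"
    by auto
qed (auto intro: permutations_of_multisetI)

lemma card_permute_list_fiber_eq:
  assumes "J \<in> permutations_of_multiset (mset I)"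
  shows "card {x. x permutes {..<length I} \<and> permute_list x I = J} =
         card {s. s permutes {..<length I} \<and> permute_list s I = I}"
proof -
  let ?S = "{s. s permutes {..<length I} \<and> permute_list s I = I}"
  obtain y where y: "y permutes {..<length I}" "permute_list y I = J"
    using assms by (metis mset_eq_permutation permutations_of_multisetD)
  have y': "inv y permutes {..<length I}"
    using y(1) by (rule permutes_inv)
  have "{x. x permutes {..<length I} \<and> permute_list x I = J} = (\<lambda>s. s \<circ> y) ` ?S"
  proof (intro equalityI subsetI)
    fix x assume x: "x \<in> {x. x permutes {..<length I} \<and> permute_list x I = J}"
    have "permute_list (x \<circ> inv y) I = permute_list (inv y) (permute_list y I)"
      using x y' by (simp add: permute_list_compose y(2))
    also have "\<dots> = permute_list (y \<circ> inv y) I"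
      using y' by (simp add: permute_list_compose)
    also have "\<dots> = I"
      using y(1) by (simp add: permutes_inv_o)
    finally have "x \<circ> inv y \<in> ?S"
      using x y' by (auto intro: permutes_compose)
    moreover have "x = x \<circ> inv y \<circ> y"
      using y(1) by (simp add: fun_eq_iff permutes_inverses)
    ultimately show "x \<in> (\<lambda>s. s \<circ> y) ` ?S"
      by blast
  qed (use y in \<open>auto intro: permutes_compose simp: permute_list_compose\<close>)
  moreover have "inj_on (\<lambda>s. s \<circ> y) ?S"
    using y(1) by (auto intro!: inj_onI simp: fun_eq_iff) (metis permutes_inverses(1))
  ultimately show ?thesis
    by (simp add: card_image)
qed

(* All fibres of x |-> permute_list x I have the size of the stabiliser, and
   k! = |permutations_of_multiset (mset I)| * alpha I. *)
lemma card_permute_list_fiber: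
  assumes "J \<in> permutations_of_multiset (mset I)"
  shows "card {x. x permutes {..<length I} \<and> permute_list x I = J} = alpha I"
proof -
  let ?P = "{x. x permutes {..<length I}}" and ?M = "permutations_of_multiset (mset I)"
  let ?s = "card {s. s permutes {..<length I} \<and> permute_list s I = I}"
  have "card ?P = (\<Sum>J\<in>(\<lambda>x. permute_list x I) ` ?P. card {x \<in> ?P. permute_list x I = J})"
    using sum.image_gen[OF finite_permutations[of "{..<length I}"], of "\<lambda>_. 1::nat"] by simp
  also have "\<dots> = card ?M * ?s"
    unfolding permute_list_image_permutes by (simp add: card_permute_list_fiber_eq)
  finally have "card ?M * ?s = card ?M * alpha I"
    using card_permutations_of_multiset_alpha[of I] by (simp add: card_permutations)
  moreover have "card ?M \<noteq> 0"
    by (simp add: card_gt_0_iff[symmetric])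
  ultimately show ?thesis
    using card_permute_list_fiber_eq[OF assms] by simp
qed

lemma sum_permutes_permute_list:
  "(\<Sum>x | x permutes {..<length I}. F (permute_list x I)) =
     sscale (of_nat (alpha I)) (\<Sum>J\<in>permutations_of_multiset (mset I). F J)"
proof -
  let ?P = "{x. x permutes {..<length I}}"
  have "(\<Sum>x\<in>?P. F (permute_list x I)) =
      (\<Sum>J\<in>(\<lambda>x. permute_list x I) ` ?P. \<Sum>x\<in>{x \<in> ?P. permute_list x I = J}. F (permute_list x I))"
    by (rule sum.image_gen[OF finite_permutations]) simp
  also have "\<dots> = (\<Sum>J\<in>permutations_of_multiset (mset I). sscale (of_nat (alpha I)) (F J))"
    unfolding permute_list_image_permutes
  proof (intro sum.cong refl)
    fix J assume J: "J \<in> permutations_of_multiset (mset I)"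
    have "(\<Sum>x\<in>{x \<in> ?P. permute_list x I = J}. F (permute_list x I)) = (\<Sum>x\<in>{x \<in> ?P. permute_list x I = J}. F J)"
      by (rule sum.cong) auto
    also have "\<dots> = sscale (of_nat (alpha I)) (F J)"
      unfolding sum_const_sscale using card_permute_list_fiber[OF J] by simp
    finally show "(\<Sum>x\<in>{x \<in> ?P. permute_list x I = J}. F (permute_list x I)) = sscale (of_nat (alpha I)) (F J)" .
  qed
  finally show ?thesis
    by (simp add: sscale_sum)
qed

definition sorted_submsets :: "nat \<Rightarrow> nat multiset \<Rightarrow> nat list set" where
  "sorted_submsets a A = {S. sorted S \<and> length S = a \<and> mset S \<subseteq># A}"

(* decomps m n lam I for an arbitrary multiset A in place of mset I and without the range
   condition, so that it recurses along lam (sorted_decomps_Cons). *)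
definition sorted_decomps :: "nat list \<Rightarrow> nat multiset \<Rightarrow> nat list list set" where
  "sorted_decomps lam A = {Is. length Is = length lam \<and>
     (\<forall>j<length lam. sorted (Is ! j) \<and> length (Is ! j) = lam ! j) \<and> mset (concat Is) = A}"

lemma finite_sorted_submsets: "finite (sorted_submsets a A)"
proof (rule finite_subset)
  show "sorted_submsets a A \<subseteq> {xs. set xs \<subseteq> set_mset A \<and> length xs = a}"
    by (auto simp: sorted_submsets_def dest!: set_mset_mono)
qed (simp add: finite_lists_length_eq)

lemma sorted_decomps_Nil: "sorted_decomps [] A = (if A = {#} then {[]} else {})"
  by (auto simp: sorted_decomps_def)

lemma sorted_decomps_Cons:
  "sorted_decomps (a # mu) A =
     (\<lambda>(S, Is). S # Is) ` (SIGMA S:sorted_submsets a A. sorted_decomps mu (A - mset S))"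
proof (intro equalityI subsetI)
  fix Is assume "Is \<in> sorted_decomps (a # mu) A"
  then obtain S Is' where Is: "Is = S # Is'" and "sorted S" "length S = a" "mset (concat Is) = A"
    and "length Is' = length mu" "\<forall>j<length mu. sorted (Is' ! j) \<and> length (Is' ! j) = mu ! j"
    by (cases Is) (fastforce simp: sorted_decomps_def)+
  then show "Is \<in> (\<lambda>(S, Is). S # Is) ` (SIGMA S:sorted_submsets a A. sorted_decomps mu (A - mset S))"
    by (auto simp: sorted_submsets_def sorted_decomps_def)
next
  fix Is assume "Is \<in> (\<lambda>(S, Is). S # Is) ` (SIGMA S:sorted_submsets a A. sorted_decomps mu (A - mset S))"
  then obtain S Is' where "Is = S # Is'" "S \<in> sorted_submsets a A" "Is' \<in> sorted_decomps mu (A - mset S)"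
    by auto
  then show "Is \<in> sorted_decomps (a # mu) A"
    by (auto simp: sorted_submsets_def sorted_decomps_def nth_Cons' subset_mset.add_diff_inverse)
qed

lemma finite_sorted_decomps: "finite (sorted_decomps lam A)"
  by (induction lam arbitrary: A)
    (auto simp: sorted_decomps_Nil sorted_decomps_Cons finite_sorted_submsets)

lemma permutations_of_multiset_take_sort:
  assumes S: "S \<in> sorted_submsets a A"
  shows "{J \<in> permutations_of_multiset A. sort (take a J) = S} =
    (\<lambda>(T, R). T @ R) ` (permutations_of_multiset (mset S) \<times> permutations_of_multiset (A - mset S))"
proof (intro equalityI subsetI)
  have sub: "mset S \<subseteq># A" and lS: "length S = a" and sS: "sorted S"
    using S by (auto simp: sorted_submsets_def)
  fix J assume "J \<in> {J \<in> permutations_of_multiset A. sort (take a J) = S}"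
  then have J: "mset J = A" and s: "sort (take a J) = S"
    by (auto dest: permutations_of_multisetD)
  have "mset (take a J) = mset S"
    using s by (metis mset_sort)
  moreover have "mset (drop a J) = A - mset S"
    using J calculation by (metis add_diff_cancel_left' append_take_drop_id mset_append)
  ultimately show "J \<in> (\<lambda>(T, R). T @ R) ` (permutations_of_multiset (mset S) \<times> permutations_of_multiset (A - mset S))"
    by (auto intro!: image_eqI[of _ _ "(take a J, drop a J)"] permutations_of_multisetI)
next
  have sub: "mset S \<subseteq># A" and lS: "length S = a" and sS: "sorted S"
    using S by (auto simp: sorted_submsets_def)
  fix J assume "J \<in> (\<lambda>(T, R). T @ R) ` (permutations_of_multiset (mset S) \<times> permutations_of_multiset (A - mset S))"
  then obtain T R where J: "J = T @ R" and T: "mset T = mset S" and R: "mset R = A - mset S"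
    by (auto dest: permutations_of_multisetD)
  have "length T = a"
    using T lS by (metis size_mset)
  then show "J \<in> {J \<in> permutations_of_multiset A. sort (take a J) = S}"
    using J T R sub sS by (auto intro: permutations_of_multisetI simp: properties_for_sort)
qed

lemma sort_take_in_sorted_submsets:
  assumes "J \<in> permutations_of_multiset A" and "a \<le> size A"
  shows "sort (take a J) \<in> sorted_submsets a A"
proof -
  have J: "mset J = A"
    using assms(1) by (rule permutations_of_multisetD)
  then have "mset (take a J) \<subseteq># A"
    by (metis append_take_drop_id mset_append mset_subset_eq_add_left)
  then show ?thesis
    using J assms(2) by (auto simp: sorted_submsets_def)
qed

lemma sum_sort_take_fiber:
  assumes S: "S \<in> sorted_submsets a A"
  shows "(\<Sum>J\<in>{J \<in> permutations_of_multiset A. sort (take a J) = S}. f (drop a J)) =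
    sscale (of_nat (card (permutations_of_multiset (mset S))))
      (\<Sum>R\<in>permutations_of_multiset (A - mset S). f R)"
proof -
  let ?PM = "permutations_of_multiset"
  have lS: "length S = a"
    using S by (simp add: sorted_submsets_def)
  have len: "length T = a" if "T \<in> ?PM (mset S)" for T
    using permutations_of_multisetD[OF that] lS by (metis size_mset)
  have "inj_on (\<lambda>(T, R). T @ R) (?PM (mset S) \<times> ?PM (A - mset S))"
  proof (rule inj_onI, clarify)
    fix T R T' R' assume "T \<in> ?PM (mset S)" "T' \<in> ?PM (mset S)" and "T @ R = T' @ R'"
    then show "T = T' \<and> R = R'"
      by (simp add: len)
  qed
  then have "(\<Sum>J\<in>{J \<in> ?PM A. sort (take a J) = S}. f (drop a J)) =
      (\<Sum>(T, R)\<in>?PM (mset S) \<times> ?PM (A - mset S). f (drop a (T @ R)))"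
    unfolding permutations_of_multiset_take_sort[OF S]
    by (subst sum.reindex) (simp_all add: case_prod_unfold comp_def)
  also have "\<dots> = (\<Sum>T\<in>?PM (mset S). \<Sum>R\<in>?PM (A - mset S). f R)"
    unfolding sum.cartesian_product[symmetric] by (intro sum.cong refl) (simp add: len)
  also have "\<dots> = sscale (of_nat (card (?PM (mset S)))) (\<Sum>R\<in>?PM (A - mset S). f R)"
    by (rule sum_const_sscale)
  finally show ?thesis .
qed

lemma sum_permutations_of_multiset_blocks:
  fixes G :: "nat list list \<Rightarrow> salg"
  shows "size A = sum_list lam \<Longrightarrow>
    (\<Sum>J\<in>permutations_of_multiset A. G (map sort (blocks lam J))) =
    (\<Sum>Is\<in>sorted_decomps lam A. sscale (of_nat (\<Prod>B\<leftarrow>Is. card (permutations_of_multiset (mset B)))) (G Is))"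
proof (induction lam arbitrary: A G)
  case Nil
  then show ?case
    by (simp add: sorted_decomps_Nil)
next
  case (Cons a mu)
  let ?PM = "permutations_of_multiset" and ?SA = "sorted_submsets a A"
  let ?c = "\<lambda>Is. of_nat (\<Prod>B\<leftarrow>Is. card (?PM (mset B)))"
  have "(\<lambda>J. sort (take a J)) ` ?PM A \<subseteq> ?SA"
    using Cons.prems by (auto intro: sort_take_in_sorted_submsets)
  then have "(\<Sum>J\<in>?PM A. G (map sort (blocks (a # mu) J))) =
      (\<Sum>S\<in>?SA. \<Sum>J\<in>{J \<in> ?PM A. sort (take a J) = S}. G (map sort (blocks (a # mu) J)))"
    by (intro sum.group[symmetric] finite_permutations_of_multiset finite_sorted_submsets)
  also have "\<dots> = (\<Sum>S\<in>?SA. sscale (of_nat (card (?PM (mset S))))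
      (\<Sum>R\<in>?PM (A - mset S). G (S # map sort (blocks mu R))))"
    by (intro sum.cong refl trans[OF _ sum_sort_take_fiber]) auto
  also have "\<dots> = (\<Sum>S\<in>?SA. \<Sum>Is'\<in>sorted_decomps mu (A - mset S). sscale (?c (S # Is')) (G (S # Is')))"
  proof (rule sum.cong[OF refl])
    fix S assume "S \<in> ?SA"
    then have "size (A - mset S) = sum_list mu"
      using Cons.prems by (simp add: sorted_submsets_def size_Diff_submset)
    then show "sscale (of_nat (card (?PM (mset S)))) (\<Sum>R\<in>?PM (A - mset S). G (S # map sort (blocks mu R))) =
        (\<Sum>Is'\<in>sorted_decomps mu (A - mset S). sscale (?c (S # Is')) (G (S # Is')))"
      by (simp add: Cons.IH[where G = "\<lambda>Is. G (S # Is)"] sscale_sum)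
  qed
  also have "\<dots> = (\<Sum>(S, Is')\<in>(SIGMA S:?SA. sorted_decomps mu (A - mset S)). sscale (?c (S # Is')) (G (S # Is')))"
    by (rule sum.Sigma) (simp_all add: finite_sorted_submsets finite_sorted_decomps)
  also have "\<dots> = (\<Sum>Is\<in>sorted_decomps (a # mu) A. sscale (?c Is) (G Is))"
    unfolding sorted_decomps_Cons
    by (subst sum.reindex) (auto simp: inj_on_def case_prod_unfold)
  finally show ?case .
qed

lemma sorted_decomps_mset_eq_decomps:
  assumes I: "set I \<subseteq> {1..m+n}"
  shows "sorted_decomps lam (mset I) = decomps m n lam I"
proof (intro equalityI subsetI)
  fix Is assume Is: "Is \<in> sorted_decomps lam (mset I)"
  have "set (Is ! j) \<subseteq> {1..m+n}" if "j < length lam" for j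
  proof -
    have "Is ! j \<in> set Is"
      using Is that by (simp add: sorted_decomps_def)
    then have "set (Is ! j) \<subseteq> set (concat Is)"
      by auto
    also have "\<dots> = set I"
      using Is by (intro mset_eq_setD) (simp add: sorted_decomps_def)
    finally show ?thesis
      using I by simp
  qed
  then show "Is \<in> decomps m n lam I"
    using Is by (auto simp: sorted_decomps_def decomps_def)
qed (auto simp: sorted_decomps_def decomps_def)

lemma card_young_sorted_decomps:
  assumes "Is \<in> sorted_decomps lam A"
  shows "card (young lam) = (\<Prod>B\<leftarrow>Is. card (permutations_of_multiset (mset B))) * (\<Prod>B\<leftarrow>Is. alpha B)"
proof -
  have "lam = map length Is"
    using assms by (intro nth_equalityI) (auto simp: sorted_decomps_def)
  then have "card (young lam) = (\<Prod>B\<leftarrow>Is. card (permutations_of_multiset (mset B)) * alpha B)"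
    by (simp add: card_young card_permutations_of_multiset_alpha comp_def)
  also have "\<dots> = (\<Prod>B\<leftarrow>Is. card (permutations_of_multiset (mset B))) * (\<Prod>B\<leftarrow>Is. alpha B)"
    by (induction Is) simp_all
  finally show ?thesis .
qed

lemma young_coefficient:
  assumes "Is \<in> sorted_decomps lam A"
  shows "1 / of_nat (card (young lam)) * of_nat c * of_nat (\<Prod>B\<leftarrow>Is. card (permutations_of_multiset (mset B)))
    = (of_nat c / of_nat (\<Prod>J\<leftarrow>Is. alpha J) :: complex)"
proof -
  have "card (permutations_of_multiset (mset B)) \<noteq> 0" for B :: "nat list"
    using permutations_of_multisetI[of B "mset B"] by (auto simp: card_eq_0_iff)
  then have "of_nat (\<Prod>B\<leftarrow>Is. card (permutations_of_multiset (mset B))) \<noteq> (0 :: complex)"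
    by (fastforce simp: prod_list_zero_iff)
  then show ?thesis
    by (simp add: card_young_sorted_decomps[OF assms])
qed

lemma Imm_ind_char_young_decomps:
  assumes \<theta>: "class_function \<theta>" and \<theta>_id: "\<theta> id = 1"
    and \<theta>_mult: "\<And>a b h1 h2. h1 permutes {..<a} \<Longrightarrow> h2 permutes {..<b} \<Longrightarrow>
      \<theta> (perm_dsum a h1 h2) = \<theta> h1 * \<theta> h2"
    and I: "set I \<subseteq> {1..m+n}" and lI: "length I = sum_list lam"
  shows "Imm m n (ind_char (sum_list lam) (young lam) \<theta>) I =
    (\<Sum>Is\<in>decomps m n lam I. sscale (of_nat (alpha I) / of_nat (\<Prod>J\<leftarrow>Is. alpha J))
       (sprod_list m (map (Imm m n \<theta>) Is)))"
proof -
  let ?G = "\<lambda>Is. sprod_list m (map (Imm m n \<theta>) Is)"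
  let ?c = "\<lambda>Is. of_nat (\<Prod>B\<leftarrow>Is. card (permutations_of_multiset (mset B))) :: complex"
  have "Imm m n (ind_char (sum_list lam) (young lam) \<theta>) I = sscale (1 / of_nat (card (young lam)))
      (\<Sum>x | x permutes {..<length I}. ?G (map sort (blocks lam (permute_list x I))))"
    by (rule Imm_ind_char_young[OF \<theta> \<theta>_id \<theta>_mult I lI])
  also have "(\<Sum>x | x permutes {..<length I}. ?G (map sort (blocks lam (permute_list x I)))) =
      sscale (of_nat (alpha I)) (\<Sum>J\<in>permutations_of_multiset (mset I). ?G (map sort (blocks lam J)))"
    by (rule sum_permutes_permute_list[where F = "\<lambda>J. ?G (map sort (blocks lam J))"])
  also have "(\<Sum>J\<in>permutations_of_multiset (mset I). ?G (map sort (blocks lam J))) =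
      (\<Sum>Is\<in>sorted_decomps lam (mset I). sscale (?c Is) (?G Is))"
    using lI by (intro sum_permutations_of_multiset_blocks) simp
  also have "sscale (1 / of_nat (card (young lam))) (sscale (of_nat (alpha I))
      (\<Sum>Is\<in>sorted_decomps lam (mset I). sscale (?c Is) (?G Is))) =
    (\<Sum>Is\<in>sorted_decomps lam (mset I).
      sscale (1 / of_nat (card (young lam)) * of_nat (alpha I) * ?c Is) (?G Is))"
    by (simp add: sscale_sum mult.assoc)
  also have "\<dots> = (\<Sum>Is\<in>sorted_decomps lam (mset I).
      sscale (of_nat (alpha I) / of_nat (\<Prod>J\<leftarrow>Is. alpha J)) (?G Is))"
  proof (intro sum.cong refl)
    fix Is assume "Is \<in> sorted_decomps lam (mset I)"
    then show "sscale (1 / of_nat (card (young lam)) * of_nat (alpha I) * ?c Is) (?G Is) =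
        sscale (of_nat (alpha I) / of_nat (\<Prod>J\<leftarrow>Is. alpha J)) (?G Is)"
      by (simp only: young_coefficient)
  qed
  finally show ?thesis
    unfolding sorted_decomps_mset_eq_decomps[OF I] .
qed

theorem corollary3p3:
  fixes m n :: nat and I lam :: "nat list"
  assumes "sorted I" and "set I \<subseteq> {1..m+n}" and "is_partition lam (length I)"
  shows "Imm m n (psi lam) I =
           (\<Sum>Is\<in>decomps m n lam I.
              sscale (of_nat (alpha I) / of_nat (\<Prod>J\<leftarrow>Is. alpha J))
                (sprod_list m (map (Imm m n chi_col) Is))) \<and>
         Imm m n (phi lam) I =
           (\<Sum>Is\<in>decomps m n lam I.
              sscale (of_nat (alpha I) / of_nat (\<Prod>J\<leftarrow>Is. alpha J))
                (sprod_list m (map (Imm m n chi_row) Is)))"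
proof -
  have lI: "length I = sum_list lam"
    using assms(3) by (simp add: is_partition_def)
  have "psi lam = ind_char (sum_list lam) (young lam) chi_col"
    and "phi lam = ind_char (sum_list lam) (young lam) chi_row"
    by (simp_all add: psi_def phi_def chi_col_def[abs_def] chi_row_def[abs_def])
  then show ?thesis
    using Imm_ind_char_young_decomps[OF class_function_chi_col _ _ assms(2) lI]
      Imm_ind_char_young_decomps[OF class_function_chi_row _ _ assms(2) lI]
    by (simp add: chi_col_def chi_row_def sign_perm_dsum)
qed

end
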